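(* Let $\mathcal O_\ast:\mathrm{Agg}^{\rm forest}\to\mathrm{Set}$ be the trivial (constant one-point) functor. Then $k_!(\mathcal O_\ast)\cong\mathcal O_{\rm genus}$ as functors $\mathrm{Agg}^{\rm ctd}\to\mathrm{Set}$. Concretely, for each finite set $S$ the set of connected components of the comma category $(k\downarrow *_S)$ is in natural bijection with $\mathbb N_0$, via the loop number $b_1=|E|-|V|+1$ of the ghost graph of $\phi:X\to *_S$.
   Context: A graph is $(F,V,\partial,\imath)$ with finite flag set $F$, vertex set $V$, incidence $\partial:F\to V$ and involution $\imath$ (2-element orbits are edges, fixed points outer flags); an aggregate is a graph with $\imath=\mathrm{id}$, and $*_S$ is the one-vertex aggregate with flag set $S$. For a graph morphism between aggregates, given by a surjection on vertices, an injection on flags in the contravariant direction, and a fixed-point-free involution on the flags not in the image, the ghost graph is the source aggregate with this involution added (so its edges are the "virtually contracted" pairs). $\mathrm{Agg}^{\rm ctd}$ is the category of aggregates whose morphisms are generated by isomorphisms, virtual edge contractions ${}_s\circ_t$ (for outer flags $s,t$ at distinct vertices: merge $\partial s,\partial t$, delete $s,t$, ghost edge $\{s,t\}$) and virtual loop contractions $\circ_{st}$ (for distinct $s,t$ at one vertex: delete $s,t$); $\mathrm{Agg}^{\rm forest}$ is the subcategory generated by isomorphisms and virtual edge contractions, and $k:\mathrm{Agg}^{\rm forest}\to\mathrm{Agg}^{\rm ctd}$ is the inclusion. For a functor $\mathcal O:\mathrm{Agg}^{\rm forest}\to\mathrm{Set}$, $k_!(\mathcal O)$ is the pointwise left Kan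 extension: $k_!(\mathcal O)(Y)=\mathrm{colim}_{(X,\phi)\in(k\downarrow Y)}\mathcal O(X)$, where $(k\downarrow Y)$ has objects pairs $(X,\phi:X\to Y)$ with $\phi$ in $\mathrm{Agg}^{\rm ctd}$ and morphisms $\psi:X\to X'$ in $\mathrm{Agg}^{\rm forest}$ with $\phi'\psi=\phi$; morphisms of $\mathrm{Agg}^{\rm ctd}$ act by postcomposition. $\mathcal O_{\rm genus}(X)=\mathbb N_0^{V_X}$, with isomorphisms relabelling vertices, ${}_s\circ_t$ assigning $g(\partial s)+g(\partial t)$ to the merged vertex, and $\circ_{st}$ adding $1$ at $\partial s$ (other values unchanged). *)

theory Defs
  imports Main "HOL-Library.FuncSet"
begin

text \<open>An aggregate is (F, V, d): finite flag set F, finite vertex set V,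
 incidence d : F -> V (extensional, i.e. undefined outside F); the involution is
 the identity, so all flags are outer.\<close>

type_synonym agg = "nat set \<times> nat set \<times> (nat \<Rightarrow> nat)"

definition flags :: "agg \<Rightarrow> nat set" where "flags X = fst X"
definition verts :: "agg \<Rightarrow> nat set" where "verts X = fst (snd X)"
definition bd :: "agg \<Rightarrow> nat \<Rightarrow> nat" where "bd X = snd (snd X)"

definition is_agg :: "agg \<Rightarrow> bool" where
  "is_agg X \<longleftrightarrow> finite (flags X) \<and> finite (verts X) \<and> bd X ` flags X \<subseteq> verts X
     \<and> bd X \<in> extensional (flags X)"

definition star :: "nat set \<Rightarrow> agg" where
  "star S = (S, {0}, restrict (\<lambda>_. 0) S)"

text \<open>A morphism X -> Y between aggregates: (vertex map V_X -> V_Y,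
 flag map F_Y -> F_X (contravariant), fixed-point-free involution on the flags of X
 not in the image). All components are stored extensionally (restricted to their domains).\<close>

type_synonym mor = "(nat \<Rightarrow> nat) \<times> (nat \<Rightarrow> nat) \<times> (nat \<Rightarrow> nat)"

definition vm :: "mor \<Rightarrow> nat \<Rightarrow> nat" where "vm m = fst m"
definition fm :: "mor \<Rightarrow> nat \<Rightarrow> nat" where "fm m = fst (snd m)"
definition iv :: "mor \<Rightarrow> nat \<Rightarrow> nat" where "iv m = snd (snd m)"

definition mcomp :: "agg \<Rightarrow> agg \<Rightarrow> agg \<Rightarrow> mor \<Rightarrow> mor \<Rightarrow> mor" where
  "mcomp X Y Z m1 m2 =
     (restrict (vm m2 \<circ> vm m1) (verts X),
      restrict (fm m1 \<circ> fm m2) (flags Z),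
      restrict (\<lambda>s. if s \<notin> fm m1 ` flags Y then iv m1 s
                     else fm m1 (iv m2 (the_inv_into (flags Y) (fm m1) s)))
               (flags X - fm m1 ` fm m2 ` flags Z))"

definition iso_mor :: "agg \<Rightarrow> agg \<Rightarrow> mor \<Rightarrow> bool" where
  "iso_mor X Y m \<longleftrightarrow> (\<exists>\<sigma>V \<sigma>F. bij_betw \<sigma>V (verts X) (verts Y) \<and> bij_betw \<sigma>F (flags X) (flags Y)
      \<and> (\<forall>f\<in>flags X. bd Y (\<sigma>F f) = \<sigma>V (bd X f))
      \<and> m = (restrict \<sigma>V (verts X), restrict (the_inv_into (flags X) \<sigma>F) (flags Y), (\<lambda>_. undefined)))"

definition edge_ok :: "agg \<Rightarrow> nat \<Rightarrow> nat \<Rightarrow> bool" where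
  "edge_ok X s t \<longleftrightarrow> s \<in> flags X \<and> t \<in> flags X \<and> bd X s \<noteq> bd X t"

definition edge_target :: "agg \<Rightarrow> nat \<Rightarrow> nat \<Rightarrow> agg" where
  "edge_target X s t = (flags X - {s, t}, verts X - {bd X t},
     restrict (\<lambda>f. if bd X f = bd X t then bd X s else bd X f) (flags X - {s, t}))"

definition edge_mor :: "agg \<Rightarrow> nat \<Rightarrow> nat \<Rightarrow> mor" where
  "edge_mor X s t = (restrict (\<lambda>v. if v = bd X t then bd X s else v) (verts X),
     restrict id (flags X - {s, t}), restrict (\<lambda>x. if x = s then t else s) {s, t})"

definition loop_ok :: "agg \<Rightarrow> nat \<Rightarrow> nat \<Rightarrow> bool" where
  "loop_ok X s t \<longleftrightarrow> s \<in> flags X \<and> t \<in> flags X \<and> s \<noteq> t \<and> bd X s = bd X t"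

definition loop_target :: "agg \<Rightarrow> nat \<Rightarrow> nat \<Rightarrow> agg" where
  "loop_target X s t = (flags X - {s, t}, verts X, restrict (bd X) (flags X - {s, t}))"

definition loop_mor :: "agg \<Rightarrow> nat \<Rightarrow> nat \<Rightarrow> mor" where
  "loop_mor X s t = (restrict id (verts X), restrict id (flags X - {s, t}),
     restrict (\<lambda>x. if x = s then t else s) {s, t})"

inductive ctd :: "agg \<Rightarrow> agg \<Rightarrow> mor \<Rightarrow> bool" where
  ctd_iso: "is_agg X \<Longrightarrow> is_agg Y \<Longrightarrow> iso_mor X Y m \<Longrightarrow> ctd X Y m"
| ctd_edge: "is_agg X \<Longrightarrow> edge_ok X s t \<Longrightarrow> ctd X (edge_target X s t) (edge_mor X s t)"
| ctd_loop: "is_agg X \<Longrightarrow> loop_ok X s t \<Longrightarrow> ctd X (loop_target X s t) (loop_mor X s t)"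
| ctd_comp: "ctd X Y m1 \<Longrightarrow> ctd Y Z m2 \<Longrightarrow> ctd X Z (mcomp X Y Z m1 m2)"

inductive forest :: "agg \<Rightarrow> agg \<Rightarrow> mor \<Rightarrow> bool" where
  forest_iso: "is_agg X \<Longrightarrow> is_agg Y \<Longrightarrow> iso_mor X Y m \<Longrightarrow> forest X Y m"
| forest_edge: "is_agg X \<Longrightarrow> edge_ok X s t \<Longrightarrow> forest X (edge_target X s t) (edge_mor X s t)"
| forest_comp: "forest X Y m1 \<Longrightarrow> forest Y Z m2 \<Longrightarrow> forest X Z (mcomp X Y Z m1 m2)"

text \<open>A functor O : Agg^forest -> Set is given by its object part Ob and its action
 Ar X X' psi : O(X) -> O(X'). k_!(O)(Y) is the colimit over (k | Y), i.e. the set of pairs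
 ((X,phi), o) with phi : X -> Y in Agg^ctd and o in O(X), modulo the equivalence relation
 generated by ((X,phi),o) ~ ((X',phi'), O(psi) o) for psi : X -> X' in Agg^forest with
 phi' psi = phi.\<close>

definition lan_carrier :: "(agg \<Rightarrow> 'a set) \<Rightarrow> agg \<Rightarrow> ((agg \<times> mor) \<times> 'a) set" where
  "lan_carrier Ob Y = {((X, \<phi>), a). ctd X Y \<phi> \<and> a \<in> Ob X}"

definition lan_step :: "(agg \<Rightarrow> 'a set) \<Rightarrow> (agg \<Rightarrow> agg \<Rightarrow> mor \<Rightarrow> 'a \<Rightarrow> 'a) \<Rightarrow> agg
    \<Rightarrow> (((agg \<times> mor) \<times> 'a) \<times> ((agg \<times> mor) \<times> 'a)) set" where
  "lan_step Ob Ar Y = {(((X, \<phi>), a), ((X', \<phi>'), Ar X X' \<psi> a)) | X \<phi> a X' \<phi>' \<psi>.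
      ctd X Y \<phi> \<and> ctd X' Y \<phi>' \<and> a \<in> Ob X \<and> forest X X' \<psi> \<and> mcomp X X' Y \<psi> \<phi>' = \<phi>}"

definition lan_equiv :: "(agg \<Rightarrow> 'a set) \<Rightarrow> (agg \<Rightarrow> agg \<Rightarrow> mor \<Rightarrow> 'a \<Rightarrow> 'a) \<Rightarrow> agg
    \<Rightarrow> (((agg \<times> mor) \<times> 'a) \<times> ((agg \<times> mor) \<times> 'a)) set" where
  "lan_equiv Ob Ar Y = ((lan_step Ob Ar Y \<union> (lan_step Ob Ar Y)\<inverse>)\<^sup>*) \<inter> (lan_carrier Ob Y \<times> lan_carrier Ob Y)"

definition lan :: "(agg \<Rightarrow> 'a set) \<Rightarrow> (agg \<Rightarrow> agg \<Rightarrow> mor \<Rightarrow> 'a \<Rightarrow> 'a) \<Rightarrow> agg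
    \<Rightarrow> ((agg \<times> mor) \<times> 'a) set set" where
  "lan Ob Ar Y = lan_carrier Ob Y // lan_equiv Ob Ar Y"

definition lan_class :: "(agg \<Rightarrow> 'a set) \<Rightarrow> (agg \<Rightarrow> agg \<Rightarrow> mor \<Rightarrow> 'a \<Rightarrow> 'a) \<Rightarrow> agg
    \<Rightarrow> ((agg \<times> mor) \<times> 'a) \<Rightarrow> ((agg \<times> mor) \<times> 'a) set" where
  "lan_class Ob Ar Y e = lan_equiv Ob Ar Y `` {e}"

definition lan_map :: "(agg \<Rightarrow> 'a set) \<Rightarrow> (agg \<Rightarrow> agg \<Rightarrow> mor \<Rightarrow> 'a \<Rightarrow> 'a) \<Rightarrow> agg \<Rightarrow> agg \<Rightarrow> mor
    \<Rightarrow> ((agg \<times> mor) \<times> 'a) set \<Rightarrow> ((agg \<times> mor) \<times> 'a) set" where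
  "lan_map Ob Ar Y Y' f c =
     the_elem ((\<lambda>((X, \<phi>), a). lan_class Ob Ar Y' ((X, mcomp X Y Y' \<phi> f), a)) ` c)"

definition Ostar_ob :: "agg \<Rightarrow> unit set" where "Ostar_ob X = {()}"
definition Ostar_ar :: "agg \<Rightarrow> agg \<Rightarrow> mor \<Rightarrow> unit \<Rightarrow> unit" where "Ostar_ar X X' \<psi> u = ()"

definition genus_ob :: "agg \<Rightarrow> (nat \<Rightarrow> nat) set" where
  "genus_ob X = extensional (verts X)"

definition genus_iso :: "agg \<Rightarrow> agg \<Rightarrow> mor \<Rightarrow> (nat \<Rightarrow> nat) \<Rightarrow> (nat \<Rightarrow> nat)" where
  "genus_iso X Y m g = restrict (\<lambda>w. g (the_inv_into (verts X) (vm m) w)) (verts Y)"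

definition genus_edge :: "agg \<Rightarrow> nat \<Rightarrow> nat \<Rightarrow> (nat \<Rightarrow> nat) \<Rightarrow> (nat \<Rightarrow> nat)" where
  "genus_edge X s t g = restrict (\<lambda>v. if v = bd X s then g (bd X s) + g (bd X t) else g v)
                                 (verts X - {bd X t})"

definition genus_loop :: "agg \<Rightarrow> nat \<Rightarrow> nat \<Rightarrow> (nat \<Rightarrow> nat) \<Rightarrow> (nat \<Rightarrow> nat)" where
  "genus_loop X s t g = restrict (\<lambda>v. if v = bd X s then g v + 1 else g v) (verts X)"

text \<open>Loop number b_1 = |E| - |V| + 1 of the ghost graph of phi : X -> Y
 (ghost edges = pairs of flags of X not in the image of the flag map).\<close>
definition b1 :: "agg \<Rightarrow> agg \<Rightarrow> mor \<Rightarrow> int" where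
  "b1 X Y \<phi> = int (card (flags X - fm \<phi> ` flags Y) div 2) - int (card (verts X)) + 1"

end

theory Submission
  imports Defs "HOL-Library.Nat_Bijection"
begin

text \<open>A morphism \<phi> : X \<rightarrow> Y of Agg^ctd is recorded by its vertex map, its flag map and its ghost
  involution, and the morphisms that occur can be described intrinsically (locale admissible):
  the ghost involution pairs the flags of X outside the image of the flag map within the fibres
  of the vertex map, every fibre is connected by ghost edges, and over every vertex v of Y the
  ghost graph has nonnegative loop number |E| - |V| + 1, the fibre genus of \<phi> at v. Such data
  factor into generators by contracting one ghost pair at a time.

  Fibre genera add up along composites and vanish for forest morphisms, so the genus vector of
  \<phi> is constant on connected components of (k \<down> Y). Conversely, contracting the ghost edges
  between distinct vertices is a forest step, and once only ghost loops are left, X is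
  isomorphic over Y to a canonical aggregate carrying g v ghost loops at each vertex v. Hence the
  components of (k \<down> Y) are classified by N_0^{V_Y}, naturally in Y, and for Y = *_S the single
  genus is the loop number b_1 of the ghost graph.\<close>

lemma mor_eqI: "vm m = vm m' \<Longrightarrow> fm m = fm m' \<Longrightarrow> iv m = iv m' \<Longrightarrow> m = m'"
  unfolding vm_def fm_def iv_def by (cases m; cases m') auto

lemma mor_sel [simp]: "vm (a, b, c) = a" "fm (a, b, c) = b" "iv (a, b, c) = c"
  unfolding vm_def fm_def iv_def by auto

lemma agg_sel [simp]: "flags (a, b, c) = a" "verts (a, b, c) = b" "bd (a, b, c) = c"
  unfolding flags_def verts_def bd_def by auto

lemma star_simps [simp]:
  "flags (star S) = S" "verts (star S) = {0}" "bd (star S) = restrict (\<lambda>_. 0) S"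
  unfolding star_def by auto

lemma edge_target_simps [simp]:
  "flags (edge_target X s t) = flags X - {s, t}"
  "verts (edge_target X s t) = verts X - {bd X t}"
  "bd (edge_target X s t) =
     restrict (\<lambda>f. if bd X f = bd X t then bd X s else bd X f) (flags X - {s, t})"
  unfolding edge_target_def by auto

lemma loop_target_simps [simp]:
  "flags (loop_target X s t) = flags X - {s, t}"
  "verts (loop_target X s t) = verts X"
  "bd (loop_target X s t) = restrict (bd X) (flags X - {s, t})"
  unfolding loop_target_def by auto

lemma edge_mor_simps [simp]:
  "vm (edge_mor X s t) = restrict (\<lambda>v. if v = bd X t then bd X s else v) (verts X)"
  "fm (edge_mor X s t) = restrict id (flags X - {s, t})"
  "iv (edge_mor X s t) = restrict (\<lambda>x. if x = s then t else s) {s, t}"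
  unfolding edge_mor_def by auto

lemma loop_mor_simps [simp]:
  "vm (loop_mor X s t) = restrict id (verts X)"
  "fm (loop_mor X s t) = restrict id (flags X - {s, t})"
  "iv (loop_mor X s t) = restrict (\<lambda>x. if x = s then t else s) {s, t}"
  unfolding loop_mor_def by auto

lemma mcomp_simps:
  "vm (mcomp X Y Z m1 m2) = restrict (vm m2 \<circ> vm m1) (verts X)"
  "fm (mcomp X Y Z m1 m2) = restrict (fm m1 \<circ> fm m2) (flags Z)"
  "iv (mcomp X Y Z m1 m2) =
     restrict (\<lambda>s. if s \<notin> fm m1 ` flags Y then iv m1 s
                    else fm m1 (iv m2 (the_inv_into (flags Y) (fm m1) s)))
              (flags X - fm m1 ` fm m2 ` flags Z)"
  unfolding mcomp_def by auto

lemma is_aggD: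
  assumes "is_agg X"
  shows "finite (flags X)" "finite (verts X)" "\<And>f. f \<in> flags X \<Longrightarrow> bd X f \<in> verts X"
    "bd X \<in> extensional (flags X)"
  using assms unfolding is_agg_def by auto

lemma is_agg_star: "finite S \<Longrightarrow> is_agg (star S)"
  unfolding is_agg_def by auto

lemma is_agg_edge_target: "is_agg X \<Longrightarrow> edge_ok X s t \<Longrightarrow> is_agg (edge_target X s t)"
  unfolding is_agg_def edge_ok_def by auto

lemma is_agg_loop_target: "is_agg X \<Longrightarrow> is_agg (loop_target X s t)"
  unfolding is_agg_def by auto

lemma rtrancl_map_pairs:
  assumes "(a, b) \<in> R\<^sup>*" and step: "\<And>x y. (x, y) \<in> R \<Longrightarrow> (f x, f y) \<in> S\<^sup>*"
  shows "(f a, f b) \<in> S\<^sup>*"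
  using assms(1) by induction (auto intro: rtrancl_trans step)

lemma card_fixpoint_free_involution:
  fixes f :: "'a::linorder \<Rightarrow> 'a"
  assumes "finite A" and into: "\<And>a. a \<in> A \<Longrightarrow> f a \<in> A"
    and no_fix: "\<And>a. a \<in> A \<Longrightarrow> f a \<noteq> a" and invol: "\<And>a. a \<in> A \<Longrightarrow> f (f a) = a"
  shows "card A = 2 * card {a \<in> A. a < f a}"
proof -
  let ?R = "{a \<in> A. a < f a}"
  have split: "A = ?R \<union> f ` ?R"
  proof (intro equalityI subsetI)
    fix a assume a: "a \<in> A"
    show "a \<in> ?R \<union> f ` ?R"
    proof (cases "a < f a")
      case False
      then have "f a \<in> ?R" using a into no_fix[OF a] invol[OF a] by (simp add: order_le_neq_trans)
      then have "a \<in> f ` ?R" by (rule image_eqI[rotated]) (use invol[OF a] in simp)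
      then show ?thesis ..
    qed (use a in simp)
  qed (use into in blast)
  have disj: "?R \<inter> f ` ?R = {}" using invol by auto
  have inj: "inj_on f ?R" by (rule inj_on_inverseI[of _ f]) (use invol in simp)
  have fin: "finite ?R" using assms(1) by simp
  have "card A = card ?R + card (f ` ?R)"
    by (subst split) (rule card_Un_disjoint[OF fin finite_imageI[OF fin] disj])
  then show ?thesis using card_image[OF inj] by simp
qed

section \<open>Ghost graphs of morphisms of aggregates\<close>

definition ghost_flags :: "agg \<Rightarrow> agg \<Rightarrow> mor \<Rightarrow> nat set" where
  "ghost_flags X Y m = flags X - fm m ` flags Y"

definition ghost_flags_at :: "agg \<Rightarrow> agg \<Rightarrow> mor \<Rightarrow> nat \<Rightarrow> nat set" where
  "ghost_flags_at X Y m v = {s \<in> ghost_flags X Y m. vm m (bd X s) = v}"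

definition fibre :: "agg \<Rightarrow> mor \<Rightarrow> nat \<Rightarrow> nat set" where
  "fibre X m v = {x \<in> verts X. vm m x = v}"

definition ghost_edges :: "agg \<Rightarrow> agg \<Rightarrow> mor \<Rightarrow> (nat \<times> nat) set" where
  "ghost_edges X Y m = {(bd X s, bd X (iv m s)) | s. s \<in> ghost_flags X Y m}"

text \<open>The loop number of the part of the ghost graph lying over the vertex v of Y.\<close>
definition fibre_genus :: "agg \<Rightarrow> agg \<Rightarrow> mor \<Rightarrow> nat \<Rightarrow> int" where
  "fibre_genus X Y m v =
     int (card (ghost_flags_at X Y m v) div 2) - int (card (fibre X m v)) + 1"

lemma ghost_flags_subset: "ghost_flags X Y m \<subseteq> flags X"
  unfolding ghost_flags_def by auto

lemma ghost_flagsD: "s \<in> ghost_flags X Y m \<Longrightarrow> s \<in> flags X"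
  unfolding ghost_flags_def by auto

lemma ghost_flags_at_subset: "ghost_flags_at X Y m v \<subseteq> ghost_flags X Y m"
  unfolding ghost_flags_at_def by auto

lemma fibre_subset: "fibre X m v \<subseteq> verts X"
  unfolding fibre_def by auto

lemma ghost_edgesI: "s \<in> ghost_flags X Y m \<Longrightarrow> (bd X s, bd X (iv m s)) \<in> ghost_edges X Y m"
  unfolding ghost_edges_def by blast

lemma ghost_edgesE:
  "(p, q) \<in> ghost_edges X Y m \<Longrightarrow>
   (\<And>s. s \<in> ghost_flags X Y m \<Longrightarrow> p = bd X s \<Longrightarrow> q = bd X (iv m s) \<Longrightarrow> P) \<Longrightarrow> P"
  unfolding ghost_edges_def by blast

locale ghost_morphism =
  fixes X Y :: agg and m :: mor
  assumes agg_src: "is_agg X" and agg_tgt: "is_agg Y"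
    and vm_ext: "vm m \<in> extensional (verts X)" and vm_onto: "vm m ` verts X = verts Y"
    and fm_ext: "fm m \<in> extensional (flags Y)" and fm_inj: "inj_on (fm m) (flags Y)"
    and fm_into: "fm m ` flags Y \<subseteq> flags X"
    and vm_bd_fm: "\<And>y. y \<in> flags Y \<Longrightarrow> vm m (bd X (fm m y)) = bd Y y"
    and iv_ext: "iv m \<in> extensional (ghost_flags X Y m)"
    and iv_ghost: "\<And>s. s \<in> ghost_flags X Y m \<Longrightarrow> iv m s \<in> ghost_flags X Y m"
    and iv_no_fix: "\<And>s. s \<in> ghost_flags X Y m \<Longrightarrow> iv m s \<noteq> s"
    and iv_iv: "\<And>s. s \<in> ghost_flags X Y m \<Longrightarrow> iv m (iv m s) = s"
    and vm_bd_iv: "\<And>s. s \<in> ghost_flags X Y m \<Longrightarrow> vm m (bd X (iv m s)) = vm m (bd X s)"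
begin

lemma bd_src: "f \<in> flags X \<Longrightarrow> bd X f \<in> verts X"
  using is_aggD(3)[OF agg_src] .

lemma finite_ghost_flags: "finite (ghost_flags X Y m)"
  using is_aggD(1)[OF agg_src] ghost_flags_subset[of X Y m] by (rule finite_subset[rotated])

lemma finite_ghost_flags_at: "finite (ghost_flags_at X Y m v)"
  using finite_ghost_flags ghost_flags_at_subset[of X Y m v] by (rule finite_subset[rotated])

lemma finite_fibre: "finite (fibre X m v)"
  using is_aggD(2)[OF agg_src] fibre_subset by (metis finite_subset)

lemma fibre_nonempty:
  assumes "v \<in> verts Y" shows "fibre X m v \<noteq> {}"
proof -
  obtain x where "x \<in> verts X" "vm m x = v" using assms vm_onto by (metis imageE)
  then show ?thesis unfolding fibre_def by blast
qed

lemma flags_src: "flags X = fm m ` flags Y \<union> ghost_flags X Y m"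
  using fm_into unfolding ghost_flags_def by blast

lemma iv_ghost_flags_at: "s \<in> ghost_flags_at X Y m v \<Longrightarrow> iv m s \<in> ghost_flags_at X Y m v"
  unfolding ghost_flags_at_def using iv_ghost vm_bd_iv by auto

lemma ghost_flags_at_vm: "s \<in> ghost_flags X Y m \<Longrightarrow> s \<in> ghost_flags_at X Y m (vm m (bd X s))"
  unfolding ghost_flags_at_def by simp

lemma vm_bd_ghost: "s \<in> ghost_flags X Y m \<Longrightarrow> vm m (bd X s) \<in> verts Y"
  using vm_onto bd_src ghost_flagsD by blast

lemma card_ghost_flags_at:
  "card (ghost_flags_at X Y m v) = 2 * card {s \<in> ghost_flags_at X Y m v. s < iv m s}"
  by (rule card_fixpoint_free_involution[OF finite_ghost_flags_at iv_ghost_flags_at])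
    (use iv_no_fix iv_iv in \<open>auto simp: ghost_flags_at_def\<close>)

lemma even_card_ghost_flags_at: "even (card (ghost_flags_at X Y m v))"
  using card_ghost_flags_at by simp

end

locale admissible = ghost_morphism +
  assumes fibre_connected:
      "\<And>v x y. v \<in> verts Y \<Longrightarrow> x \<in> fibre X m v \<Longrightarrow> y \<in> fibre X m v
        \<Longrightarrow> (x, y) \<in> (ghost_edges X Y m)\<^sup>*"
    and fibre_genus_nonneg: "\<And>v. v \<in> verts Y \<Longrightarrow> 0 \<le> fibre_genus X Y m v"

context
  fixes X Y :: agg and m :: mor
  assumes agg_X: "is_agg X" and agg_Y: "is_agg Y" and iso: "iso_mor X Y m"
begin

lemma iso_mor_bij_vm: "bij_betw (vm m) (verts X) (verts Y)"
  and iso_mor_bij_fm: "bij_betw (fm m) (flags Y) (flags X)"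
  and iso_mor_vm_bd: "\<And>y. y \<in> flags Y \<Longrightarrow> vm m (bd X (fm m y)) = bd Y y"
  and iso_mor_ext: "vm m \<in> extensional (verts X)" "fm m \<in> extensional (flags Y)"
  and iso_mor_iv: "iv m = (\<lambda>_. undefined)"
proof -
  obtain \<sigma>V \<sigma>F where bV: "bij_betw \<sigma>V (verts X) (verts Y)"
    and bF: "bij_betw \<sigma>F (flags X) (flags Y)"
    and inc: "\<forall>f\<in>flags X. bd Y (\<sigma>F f) = \<sigma>V (bd X f)"
    and m: "m = (restrict \<sigma>V (verts X), restrict (the_inv_into (flags X) \<sigma>F) (flags Y),
                 (\<lambda>_. undefined))"
    using iso unfolding iso_mor_def by blast
  show "bij_betw (vm m) (verts X) (verts Y)"
    using bV m by (simp add: bij_betw_def inj_on_def image_def)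
  show "bij_betw (fm m) (flags Y) (flags X)"
    using bij_betw_the_inv_into[OF bF] m by (simp add: bij_betw_def inj_on_def image_def)
  show "vm m (bd X (fm m y)) = bd Y y" if y: "y \<in> flags Y" for y
  proof -
    have x: "fm m y \<in> flags X" and "\<sigma>F (fm m y) = y"
      using y m bF by (auto simp: bij_betw_def the_inv_into_into f_the_inv_into_f)
    then show ?thesis using m inc is_aggD(3)[OF agg_X x] by auto
  qed
  show "vm m \<in> extensional (verts X)" "fm m \<in> extensional (flags Y)" "iv m = (\<lambda>_. undefined)"
    using m by simp_all
qed

lemma ghost_flags_iso: "ghost_flags X Y m = {}"
  using iso_mor_bij_fm unfolding ghost_flags_def bij_betw_def by simp

lemma fibre_iso: "v \<in> verts Y \<Longrightarrow> fibre X m v = {the_inv_into (verts X) (vm m) v}"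
  using iso_mor_bij_vm unfolding fibre_def bij_betw_def
  by (auto simp: the_inv_into_f_eq the_inv_into_into f_the_inv_into_f)

lemma fibre_genus_iso: "v \<in> verts Y \<Longrightarrow> fibre_genus X Y m v = 0"
  unfolding fibre_genus_def ghost_flags_at_def ghost_flags_iso by (simp add: fibre_iso)

lemma admissible_iso: "admissible X Y m"
proof unfold_locales
  show "vm m ` verts X = verts Y" "inj_on (fm m) (flags Y)" "fm m ` flags Y \<subseteq> flags X"
    using iso_mor_bij_vm iso_mor_bij_fm by (auto simp: bij_betw_def)
  show "\<And>v x y. v \<in> verts Y \<Longrightarrow> x \<in> fibre X m v \<Longrightarrow> y \<in> fibre X m v
      \<Longrightarrow> (x, y) \<in> (ghost_edges X Y m)\<^sup>*"
    by (simp add: fibre_iso)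
qed (use agg_X agg_Y iso_mor_vm_bd iso_mor_ext iso_mor_iv fibre_genus_iso ghost_flags_iso in auto)

end

context
  fixes X :: agg and s t :: nat
  assumes agg_X: "is_agg X" and ok: "edge_ok X s t"
begin

lemma ghost_flags_edge: "ghost_flags X (edge_target X s t) (edge_mor X s t) = {s, t}"
  using ok unfolding ghost_flags_def edge_ok_def by auto

lemma fibre_edge:
  "v \<in> verts (edge_target X s t) \<Longrightarrow>
   fibre X (edge_mor X s t) v = (if v = bd X s then {bd X s, bd X t} else {v})"
  using ok is_aggD(3)[OF agg_X] unfolding fibre_def edge_ok_def by auto

lemma ghost_flags_at_edge:
  "ghost_flags_at X (edge_target X s t) (edge_mor X s t) v = (if v = bd X s then {s, t} else {})"
  using ok is_aggD(3)[OF agg_X] unfolding ghost_flags_at_def ghost_flags_edge edge_ok_def by auto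

lemma fibre_genus_edge:
  "v \<in> verts (edge_target X s t) \<Longrightarrow> fibre_genus X (edge_target X s t) (edge_mor X s t) v = 0"
  using ok unfolding fibre_genus_def ghost_flags_at_edge edge_ok_def
  by (auto simp: fibre_edge card_insert_if)

lemma admissible_edge: "admissible X (edge_target X s t) (edge_mor X s t)"
proof unfold_locales
  have bs: "bd X s \<in> verts X" and bt: "bd X t \<in> verts X" and ne: "bd X s \<noteq> bd X t"
    using ok is_aggD(3)[OF agg_X] unfolding edge_ok_def by auto
  then show "vm (edge_mor X s t) ` verts X = verts (edge_target X s t)"
    by (auto simp: image_def)
  have "ghost_edges X (edge_target X s t) (edge_mor X s t) = {(bd X s, bd X t), (bd X t, bd X s)}"
    using ne unfolding ghost_edges_def ghost_flags_edge by auto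
  then show "\<And>v x y. v \<in> verts (edge_target X s t) \<Longrightarrow> x \<in> fibre X (edge_mor X s t) v
      \<Longrightarrow> y \<in> fibre X (edge_mor X s t) v
      \<Longrightarrow> (x, y) \<in> (ghost_edges X (edge_target X s t) (edge_mor X s t))\<^sup>*"
    by (auto simp: fibre_edge split: if_splits)
qed (use agg_X ok is_aggD(3)[OF agg_X] in
      \<open>auto simp: is_agg_edge_target ghost_flags_edge fibre_genus_edge inj_on_def edge_ok_def\<close>)

end

context
  fixes X :: agg and s t :: nat
  assumes agg_X: "is_agg X" and ok: "loop_ok X s t"
begin

lemma ghost_flags_loop: "ghost_flags X (loop_target X s t) (loop_mor X s t) = {s, t}"
  using ok unfolding ghost_flags_def loop_ok_def by auto

lemma fibre_loop: "v \<in> verts X \<Longrightarrow> fibre X (loop_mor X s t) v = {v}"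
  unfolding fibre_def by auto

lemma fibre_genus_loop:
  "v \<in> verts X \<Longrightarrow>
   fibre_genus X (loop_target X s t) (loop_mor X s t) v = (if v = bd X s then 1 else 0)"
proof -
  assume v: "v \<in> verts X"
  have "ghost_flags_at X (loop_target X s t) (loop_mor X s t) v = (if v = bd X s then {s, t} else {})"
    using ok is_aggD(3)[OF agg_X] unfolding ghost_flags_at_def ghost_flags_loop loop_ok_def by auto
  then show ?thesis using ok v unfolding fibre_genus_def loop_ok_def by (simp add: fibre_loop)
qed

lemma admissible_loop: "admissible X (loop_target X s t) (loop_mor X s t)"
  by unfold_locales
    (use agg_X ok is_aggD(3)[OF agg_X] in
      \<open>auto simp: is_agg_loop_target ghost_flags_loop fibre_loop fibre_genus_loop inj_on_def
         loop_ok_def\<close>)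

end

locale ghost_composable = m1: ghost_morphism X Y m1 + m2: ghost_morphism Y Z m2
  for X Y Z :: agg and m1 m2 :: mor
begin

abbreviation m12 :: mor where "m12 \<equiv> mcomp X Y Z m1 m2"

lemma vm_mcomp: "x \<in> verts X \<Longrightarrow> vm m12 x = vm m2 (vm m1 x)"
  by (simp add: mcomp_simps)

lemma fm_mcomp: "z \<in> flags Z \<Longrightarrow> fm m12 z = fm m1 (fm m2 z)"
  by (simp add: mcomp_simps)

lemma fm_mcomp_image: "fm m12 ` flags Z = fm m1 ` fm m2 ` flags Z"
  by (force simp: image_iff fm_mcomp)

lemma ghost_flags_mcomp: "ghost_flags X Z m12 = ghost_flags X Y m1 \<union> fm m1 ` ghost_flags Y Z m2"
proof -
  have "fm m1 ` (flags Y - fm m2 ` flags Z) = fm m1 ` flags Y - fm m1 ` fm m2 ` flags Z"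
    using m1.fm_inj m2.fm_into by (intro inj_on_image_set_diff) auto
  then show ?thesis
    unfolding ghost_flags_def fm_mcomp_image using m1.fm_into m2.fm_into by auto
qed

lemma ghost_flags_mcomp_disjoint: "ghost_flags X Y m1 \<inter> fm m1 ` ghost_flags Y Z m2 = {}"
  unfolding ghost_flags_def by auto

lemma iv_mcomp_ghost1: "s \<in> ghost_flags X Y m1 \<Longrightarrow> iv m12 s = iv m1 s"
  using m2.fm_into unfolding ghost_flags_def by (auto simp: mcomp_simps)

lemma iv_mcomp_ghost2: "y \<in> ghost_flags Y Z m2 \<Longrightarrow> iv m12 (fm m1 y) = fm m1 (iv m2 y)"
proof -
  assume y: "y \<in> ghost_flags Y Z m2"
  then have yY: "y \<in> flags Y" by (rule ghost_flagsD)
  have "fm m1 y \<in> flags X - fm m1 ` fm m2 ` flags Z"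
    using ghost_flags_mcomp y unfolding ghost_flags_def fm_mcomp_image by blast
  then show ?thesis using yY the_inv_into_f_f[OF m1.fm_inj yY] by (auto simp: mcomp_simps)
qed

lemma fibre_mcomp: "z \<in> verts Z \<Longrightarrow> fibre X m12 z = (\<Union>w\<in>fibre Y m2 z. fibre X m1 w)"
  using m1.vm_onto unfolding fibre_def by (auto simp: vm_mcomp)

lemma vm_mcomp_bd: "f \<in> flags X \<Longrightarrow> vm m12 (bd X f) = vm m2 (vm m1 (bd X f))"
  using m1.bd_src vm_mcomp by blast

lemma vm_mcomp_bd_fm: "y \<in> flags Y \<Longrightarrow> vm m12 (bd X (fm m1 y)) = vm m2 (bd Y y)"
  using m1.fm_into m1.vm_bd_fm vm_mcomp_bd by auto

lemma ghost_flags_at_mcomp: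
  assumes z: "z \<in> verts Z"
  shows "ghost_flags_at X Z m12 z =
    (\<Union>w\<in>fibre Y m2 z. ghost_flags_at X Y m1 w) \<union> fm m1 ` ghost_flags_at Y Z m2 z"
proof (intro equalityI subsetI)
  fix s assume s: "s \<in> ghost_flags_at X Z m12 z"
  then have sg: "s \<in> ghost_flags X Z m12" and sz: "vm m12 (bd X s) = z"
    unfolding ghost_flags_at_def by auto
  show "s \<in> (\<Union>w\<in>fibre Y m2 z. ghost_flags_at X Y m1 w) \<union> fm m1 ` ghost_flags_at Y Z m2 z"
  proof (cases "s \<in> ghost_flags X Y m1")
    case True
    then have "vm m1 (bd X s) \<in> fibre Y m2 z"
      using sz m1.vm_bd_ghost vm_mcomp_bd ghost_flagsD[of _ X Y m1] unfolding fibre_def by auto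
    then show ?thesis using True unfolding ghost_flags_at_def by blast
  next
    case False
    then obtain y where y: "y \<in> ghost_flags Y Z m2" and sy: "s = fm m1 y"
      using sg ghost_flags_mcomp by auto
    then have "vm m2 (bd Y y) = z"
      using sz vm_mcomp_bd_fm ghost_flagsD[of _ Y Z m2] by auto
    then show ?thesis using y sy unfolding ghost_flags_at_def by auto
  qed
next
  fix s assume "s \<in> (\<Union>w\<in>fibre Y m2 z. ghost_flags_at X Y m1 w) \<union> fm m1 ` ghost_flags_at Y Z m2 z"
  then show "s \<in> ghost_flags_at X Z m12 z"
  proof
    assume "s \<in> (\<Union>w\<in>fibre Y m2 z. ghost_flags_at X Y m1 w)"
    then obtain w where w: "w \<in> fibre Y m2 z" "s \<in> ghost_flags X Y m1" "vm m1 (bd X s) = w"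
      unfolding ghost_flags_at_def by auto
    then show ?thesis
      using ghost_flags_mcomp vm_mcomp_bd ghost_flagsD[of _ X Y m1]
      unfolding ghost_flags_at_def fibre_def by auto
  next
    assume "s \<in> fm m1 ` ghost_flags_at Y Z m2 z"
    then obtain y where "y \<in> ghost_flags Y Z m2" "vm m2 (bd Y y) = z" "s = fm m1 y"
      unfolding ghost_flags_at_def by auto
    then show ?thesis
      using ghost_flags_mcomp vm_mcomp_bd_fm ghost_flagsD[of _ Y Z m2]
      unfolding ghost_flags_at_def by auto
  qed
qed

lemma card_fibre_mcomp:
  "z \<in> verts Z \<Longrightarrow> card (fibre X m12 z) = (\<Sum>w\<in>fibre Y m2 z. card (fibre X m1 w))"
  unfolding fibre_mcomp
  by (rule card_UN_disjoint) (use m1.finite_fibre m2.finite_fibre in \<open>auto simp: fibre_def\<close>)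

lemma card_ghost_flags_at_mcomp:
  assumes z: "z \<in> verts Z"
  shows "card (ghost_flags_at X Z m12 z) =
    (\<Sum>w\<in>fibre Y m2 z. card (ghost_flags_at X Y m1 w)) + card (ghost_flags_at Y Z m2 z)"
proof -
  have "card (\<Union>w\<in>fibre Y m2 z. ghost_flags_at X Y m1 w) =
        (\<Sum>w\<in>fibre Y m2 z. card (ghost_flags_at X Y m1 w))"
    by (rule card_UN_disjoint)
      (use m1.finite_ghost_flags_at m2.finite_fibre in \<open>auto simp: ghost_flags_at_def\<close>)
  moreover have "card (fm m1 ` ghost_flags_at Y Z m2 z) = card (ghost_flags_at Y Z m2 z)"
    using ghost_flags_at_subset[of Y Z m2 z] ghost_flags_subset[of Y Z m2]
    by (intro card_image inj_on_subset[OF m1.fm_inj]) blast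
  moreover have "(\<Union>w\<in>fibre Y m2 z. ghost_flags_at X Y m1 w) \<inter> fm m1 ` ghost_flags_at Y Z m2 z = {}"
    using ghost_flags_mcomp_disjoint ghost_flags_at_subset by blast
  ultimately show ?thesis unfolding ghost_flags_at_mcomp[OF z]
    by (subst card_Un_disjoint)
      (use m1.finite_ghost_flags_at m2.finite_ghost_flags_at m2.finite_fibre in auto)
qed

lemma fibre_genus_mcomp:
  assumes z: "z \<in> verts Z"
  shows "fibre_genus X Z m12 z = (\<Sum>w\<in>fibre Y m2 z. fibre_genus X Y m1 w) + fibre_genus Y Z m2 z"
proof -
  let ?F = "fibre Y m2 z"
  have half_sum: "(\<Sum>w\<in>?F. card (ghost_flags_at X Y m1 w)) div 2 =
                  (\<Sum>w\<in>?F. card (ghost_flags_at X Y m1 w) div 2)"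
    using m1.card_ghost_flags_at by (simp add: sum_distrib_left[symmetric])
  have "card (ghost_flags_at X Z m12 z) div 2 =
        (\<Sum>w\<in>?F. card (ghost_flags_at X Y m1 w) div 2) + card (ghost_flags_at Y Z m2 z) div 2"
    using card_ghost_flags_at_mcomp[OF z] half_sum m2.card_ghost_flags_at by simp
  then show ?thesis
    unfolding fibre_genus_def card_fibre_mcomp[OF z]
    by (simp add: sum.distrib sum_subtractf)
qed

lemma iv_mcomp:
  assumes s: "s \<in> ghost_flags X Z m12"
  shows "iv m12 s \<in> ghost_flags X Z m12 \<and> iv m12 s \<noteq> s \<and> iv m12 (iv m12 s) = s
    \<and> vm m12 (bd X (iv m12 s)) = vm m12 (bd X s)"
proof (cases "s \<in> ghost_flags X Y m1")
  case True
  have i: "iv m1 s \<in> ghost_flags X Y m1" using m1.iv_ghost[OF True] .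
  then show ?thesis
    using iv_mcomp_ghost1[OF True] iv_mcomp_ghost1[OF i] m1.iv_no_fix[OF True] m1.iv_iv[OF True]
      m1.vm_bd_iv[OF True] ghost_flags_mcomp vm_mcomp_bd ghost_flagsD[of _ X Y m1] True
    by auto
next
  case False
  then obtain y where y: "y \<in> ghost_flags Y Z m2" and sy: "s = fm m1 y"
    using s ghost_flags_mcomp by auto
  have i: "iv m2 y \<in> ghost_flags Y Z m2" using m2.iv_ghost[OF y] .
  have yY: "y \<in> flags Y" and iY: "iv m2 y \<in> flags Y" using y i by (blast dest: ghost_flagsD)+
  have ne: "fm m1 (iv m2 y) \<noteq> fm m1 y"
    using m2.iv_no_fix[OF y] m1.fm_inj yY iY by (auto dest: inj_onD)
  show ?thesis
    unfolding sy using iv_mcomp_ghost2[OF y] iv_mcomp_ghost2[OF i] m2.iv_iv[OF y] i ne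
      ghost_flags_mcomp vm_mcomp_bd_fm[OF yY] vm_mcomp_bd_fm[OF iY] m2.vm_bd_iv[OF y]
    by auto
qed

lemma ghost_morphism_mcomp: "ghost_morphism X Z m12"
proof unfold_locales
  show "vm m12 \<in> extensional (verts X)" "fm m12 \<in> extensional (flags Z)"
    by (simp_all add: mcomp_simps)
  have "vm m12 ` verts X = vm m2 ` vm m1 ` verts X"
    by (simp add: image_image vm_mcomp cong: image_cong)
  then show "vm m12 ` verts X = verts Z"
    using m1.vm_onto m2.vm_onto by simp
  show "inj_on (fm m12) (flags Z)"
    using comp_inj_on[OF m2.fm_inj inj_on_subset[OF m1.fm_inj m2.fm_into]]
    by (simp add: inj_on_def fm_mcomp)
  show "fm m12 ` flags Z \<subseteq> flags X"
    using m1.fm_into m2.fm_into by (auto simp: fm_mcomp)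
  show "vm m12 (bd X (fm m12 y)) = bd Z y" if "y \<in> flags Z" for y
    using that m2.fm_into m2.vm_bd_fm vm_mcomp_bd_fm by (auto simp: fm_mcomp)
  show "iv m12 \<in> extensional (ghost_flags X Z m12)"
    unfolding ghost_flags_def fm_mcomp_image by (simp add: mcomp_simps)
qed (use m1.agg_src m2.agg_tgt iv_mcomp in blast)+

lemma ghost_edges_mcomp1: "ghost_edges X Y m1 \<subseteq> ghost_edges X Z m12"
  using ghost_edgesI[of _ X Z m12] ghost_flags_mcomp iv_mcomp_ghost1
  unfolding ghost_edges_def by fastforce

lemma ghost_edges_mcomp2:
  "y \<in> ghost_flags Y Z m2 \<Longrightarrow> (bd X (fm m1 y), bd X (fm m1 (iv m2 y))) \<in> ghost_edges X Z m12"
  using ghost_edgesI[of "fm m1 y" X Z m12] ghost_flags_mcomp iv_mcomp_ghost2 by force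

end

context ghost_composable
begin

text \<open>A ghost path in Y between the images of x and y lifts to a ghost path in X: each
  ghost edge of m2 is the image of a ghost edge of the composite, and consecutive lifts are
  joined inside the (connected) fibres of m1.\<close>
lemma ghost_path_lift:
  assumes "admissible X Y m1" and "(w, w') \<in> (ghost_edges Y Z m2)\<^sup>*"
    and "x \<in> verts X" "vm m1 x = w" "y \<in> verts X" "vm m1 y = w'"
  shows "(x, y) \<in> (ghost_edges X Z m12)\<^sup>*"
  using assms(2-)
proof (induction arbitrary: y rule: rtrancl_induct)
  case base
  then have "(x, y) \<in> (ghost_edges X Y m1)\<^sup>*"
    using admissible.fibre_connected[OF assms(1), of w x y] m1.vm_onto unfolding fibre_def by blast
  then show ?case using rtrancl_mono[OF ghost_edges_mcomp1] by blast
next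
  case (step u w')
  obtain y0 where y0: "y0 \<in> ghost_flags Y Z m2" and u: "u = bd Y y0"
    and w': "w' = bd Y (iv m2 y0)"
    using step(2) by (rule ghost_edgesE)
  have i0: "iv m2 y0 \<in> ghost_flags Y Z m2" using m2.iv_ghost[OF y0] .
  let ?p = "bd X (fm m1 y0)" and ?q = "bd X (fm m1 (iv m2 y0))"
  have pX: "?p \<in> verts X" and qX: "?q \<in> verts X"
    using m1.bd_src m1.fm_into ghost_flagsD[OF y0] ghost_flagsD[OF i0] by blast+
  have pu: "vm m1 ?p = u" and qw: "vm m1 ?q = w'"
    using m1.vm_bd_fm ghost_flagsD[OF y0] ghost_flagsD[OF i0] u w' by auto
  have "(x, ?p) \<in> (ghost_edges X Z m12)\<^sup>*" using step.IH[OF step.prems(1,2) pX pu] .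
  moreover have "(?p, ?q) \<in> ghost_edges X Z m12" using ghost_edges_mcomp2[OF y0] .
  moreover have "(?q, y) \<in> (ghost_edges X Y m1)\<^sup>*"
    using admissible.fibre_connected[OF assms(1), of w' ?q y] qX qw step.prems(3,4) m1.vm_onto
    unfolding fibre_def by blast
  then have "(?q, y) \<in> (ghost_edges X Z m12)\<^sup>*" using rtrancl_mono[OF ghost_edges_mcomp1] by blast
  ultimately show ?case by (meson rtrancl_into_rtrancl rtrancl_trans)
qed

end

lemma admissible_mcomp:
  assumes adm1: "admissible X Y m1" and adm2: "admissible Y Z m2"
  shows "admissible X Z (mcomp X Y Z m1 m2)"
proof -
  interpret ghost_composable X Y Z m1 m2
    using adm1 adm2 by (intro ghost_composable.intro admissible.axioms(1))
  show ?thesis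
  proof (intro admissible.intro ghost_morphism_mcomp admissible_axioms.intro)
    fix z x y assume z: "z \<in> verts Z" and x: "x \<in> fibre X m12 z" and y: "y \<in> fibre X m12 z"
    obtain wx where wx: "wx \<in> fibre Y m2 z" "x \<in> fibre X m1 wx" using x fibre_mcomp[OF z] by auto
    obtain wy where wy: "wy \<in> fibre Y m2 z" "y \<in> fibre X m1 wy" using y fibre_mcomp[OF z] by auto
    show "(x, y) \<in> (ghost_edges X Z m12)\<^sup>*"
      using ghost_path_lift[OF adm1 admissible.fibre_connected[OF adm2 z wx(1) wy(1)]] wx(2) wy(2)
      unfolding fibre_def by blast
  next
    fix z assume z: "z \<in> verts Z"
    have "0 \<le> (\<Sum>w\<in>fibre Y m2 z. fibre_genus X Y m1 w)"
      using admissible.fibre_genus_nonneg[OF adm1] fibre_subset by (blast intro: sum_nonneg)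
    then show "0 \<le> fibre_genus X Z m12 z"
      using fibre_genus_mcomp[OF z] admissible.fibre_genus_nonneg[OF adm2 z] by simp
  qed
qed

lemma admissible_if_ctd: "ctd X Y m \<Longrightarrow> admissible X Y m"
proof (induction rule: ctd.induct)
  case (ctd_comp X Y m1 Z m2)
  then show ?case by (blast intro: admissible_mcomp)
qed (simp_all add: admissible_iso admissible_edge admissible_loop)

lemma ghost_morphism_if_ctd: "ctd X Y m \<Longrightarrow> ghost_morphism X Y m"
  using admissible_if_ctd admissible.axioms(1) by blast

lemma ctd_if_forest: "forest X Y m \<Longrightarrow> ctd X Y m"
  by (induction rule: forest.induct) (auto intro: ctd.intros)

lemma fibre_genus_forest: "forest X Y m \<Longrightarrow> v \<in> verts Y \<Longrightarrow> fibre_genus X Y m v = 0"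
proof (induction arbitrary: v rule: forest.induct)
  case (forest_comp X Y m1 Z m2)
  then interpret ghost_composable X Y Z m1 m2
    by (intro ghost_composable.intro ghost_morphism_if_ctd ctd_if_forest)
  have "(\<Sum>w\<in>fibre Y m2 v. fibre_genus X Y m1 w) = 0"
    using forest_comp.IH(1) fibre_subset by (blast intro: sum.neutral)
  then show ?case using fibre_genus_mcomp[OF forest_comp.prems] forest_comp.IH(2)[OF forest_comp.prems]
    by simp
qed (simp_all add: fibre_genus_iso fibre_genus_edge)

lemma mcomp_assoc:
  assumes gm1: "ghost_morphism W X m1" and gm2: "ghost_morphism X Y m2"
    and gm3: "ghost_morphism Y Z m3"
  shows "mcomp W Y Z (mcomp W X Y m1 m2) m3 = mcomp W X Z m1 (mcomp X Y Z m2 m3)"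
    (is "?L = ?R")
proof -
  let ?m12 = "mcomp W X Y m1 m2" and ?m23 = "mcomp X Y Z m2 m3"
  interpret c12: ghost_composable W X Y m1 m2 by (rule ghost_composable.intro[OF gm1 gm2])
  interpret c23: ghost_composable X Y Z m2 m3 by (rule ghost_composable.intro[OF gm2 gm3])
  interpret cL: ghost_composable W Y Z ?m12 m3
    by (rule ghost_composable.intro[OF c12.ghost_morphism_mcomp gm3])
  interpret cR: ghost_composable W X Z m1 ?m23
    by (rule ghost_composable.intro[OF gm1 c23.ghost_morphism_mcomp])
  have vm: "vm ?L = vm ?R"
  proof
    fix w show "vm ?L w = vm ?R w"
      using c12.m1.vm_onto by (cases "w \<in> verts W") (auto simp: mcomp_simps)
  qed
  have fm: "fm ?L = fm ?R"
  proof
    fix z show "fm ?L z = fm ?R z"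
      using c23.m2.fm_into by (cases "z \<in> flags Z") (auto simp: mcomp_simps)
  qed
  then have gh: "ghost_flags W Z ?L = ghost_flags W Z ?R" by (simp add: ghost_flags_def)
  have "iv ?L s = iv ?R s" for s
  proof (cases "s \<in> ghost_flags W Z ?R")
    case False
    then have "s \<notin> ghost_flags W Z ?L" using gh by simp
    then show ?thesis
      using ghost_morphism.iv_ext[OF cL.ghost_morphism_mcomp]
        ghost_morphism.iv_ext[OF cR.ghost_morphism_mcomp] False
      by (metis extensional_arb)
  next
    case True
    consider (W) "s \<in> ghost_flags W X m1"
      | (X) x where "x \<in> ghost_flags X Y m2" "s = fm m1 x"
      | (Y) y where "y \<in> ghost_flags Y Z m3" "s = fm m1 (fm m2 y)"
      using True unfolding cR.ghost_flags_mcomp c23.ghost_flags_mcomp by blast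
    then show ?thesis
    proof cases
      case W
      then have "s \<in> ghost_flags W Y ?m12" unfolding c12.ghost_flags_mcomp by blast
      then have "iv ?L s = iv m1 s" using cL.iv_mcomp_ghost1 c12.iv_mcomp_ghost1[OF W] by simp
      then show ?thesis using cR.iv_mcomp_ghost1[OF W] by simp
    next
      case X
      then have "s \<in> ghost_flags W Y ?m12" unfolding c12.ghost_flags_mcomp by blast
      then have "iv ?L s = fm m1 (iv m2 x)"
        using cL.iv_mcomp_ghost1 c12.iv_mcomp_ghost2[OF X(1)] X(2) by simp
      moreover have "x \<in> ghost_flags X Z ?m23" using X(1) unfolding c23.ghost_flags_mcomp by blast
      ultimately show ?thesis
        using cR.iv_mcomp_ghost2 c23.iv_mcomp_ghost1[OF X(1)] X(2) by simp
    next
      case Y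
      have yY: "y \<in> flags Y" and iyY: "iv m3 y \<in> flags Y"
        using Y(1) c23.m2.iv_ghost by (blast dest: ghost_flagsD)+
      have "iv ?L s = fm ?m12 (iv m3 y)"
        using cL.iv_mcomp_ghost2[OF Y(1)] Y(2) c12.fm_mcomp[OF yY] by simp
      also have "\<dots> = fm m1 (iv ?m23 (fm m2 y))"
        using c12.fm_mcomp[OF iyY] c23.iv_mcomp_ghost2[OF Y(1)] by simp
      also have "\<dots> = iv ?R s"
      proof -
        have "fm m2 y \<in> ghost_flags X Z ?m23" using Y(1) unfolding c23.ghost_flags_mcomp by blast
        then show ?thesis using cR.iv_mcomp_ghost2 Y(2) by simp
      qed
      finally show ?thesis .
    qed
  qed
  then show ?thesis using vm fm by (intro mor_eqI) auto
qed

section \<open>Factorisation into generators\<close>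

context admissible
begin

lemma card_fibre_if_ghost_loops:
  assumes loops: "\<forall>s\<in>ghost_flags X Y m. bd X (iv m s) = bd X s" and v: "v \<in> verts Y"
  shows "card (fibre X m v) = 1"
proof -
  have "ghost_edges X Y m \<subseteq> Id" using loops unfolding ghost_edges_def by auto
  then have "x = y" if "x \<in> fibre X m v" "y \<in> fibre X m v" for x y
    using fibre_connected[OF v that] rtrancl_mono[of "ghost_edges X Y m" Id] by auto
  moreover obtain x where "x \<in> fibre X m v" using fibre_nonempty[OF v] by blast
  ultimately have "fibre X m v = {x}" by blast
  then show ?thesis by simp
qed

lemma inj_on_vm_if_ghost_loops:
  assumes "\<forall>s\<in>ghost_flags X Y m. bd X (iv m s) = bd X s"
  shows "inj_on (vm m) (verts X)"
proof (rule inj_onI)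
  fix x y assume x: "x \<in> verts X" and y: "y \<in> verts X" and xy: "vm m x = vm m y"
  have "x \<in> fibre X m (vm m x)" "y \<in> fibre X m (vm m x)" using x y xy unfolding fibre_def by auto
  then show "x = y"
    using card_fibre_if_ghost_loops[OF assms] vm_onto x by (metis card_1_singletonE image_eqI singletonD)
qed

lemma iso_mor_if_no_ghost_flags:
  assumes no_ghost: "ghost_flags X Y m = {}"
  shows "iso_mor X Y m"
proof -
  have bV: "bij_betw (vm m) (verts X) (verts Y)"
    using inj_on_vm_if_ghost_loops vm_onto no_ghost by (simp add: bij_betw_def)
  have fm_onto: "fm m ` flags Y = flags X" using no_ghost fm_into unfolding ghost_flags_def by blast
  define \<sigma>F where "\<sigma>F = the_inv_into (flags Y) (fm m)"
  have bF: "bij_betw \<sigma>F (flags X) (flags Y)"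
    unfolding \<sigma>F_def using fm_inj fm_onto by (intro bij_betw_the_inv_into) (simp add: bij_betw_def)
  have \<sigma>F_fm: "\<sigma>F (fm m y) = y" if "y \<in> flags Y" for y
    unfolding \<sigma>F_def using the_inv_into_f_f[OF fm_inj that] .
  have inc: "\<forall>f\<in>flags X. bd Y (\<sigma>F f) = vm m (bd X f)"
  proof
    fix f assume "f \<in> flags X"
    then obtain y where "y \<in> flags Y" "f = fm m y" using fm_onto by blast
    then show "bd Y (\<sigma>F f) = vm m (bd X f)" using \<sigma>F_fm vm_bd_fm by simp
  qed
  have fm_eq: "fm m = restrict (the_inv_into (flags X) \<sigma>F) (flags Y)"
  proof (rule extensionalityI[OF fm_ext restrict_extensional])
    fix y assume y: "y \<in> flags Y"
    have "the_inv_into (flags X) \<sigma>F y = fm m y"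
      by (rule the_inv_into_f_eq[OF bij_betw_imp_inj_on[OF bF] \<sigma>F_fm[OF y]]) (use y fm_into in blast)
    then show "fm m y = restrict (the_inv_into (flags X) \<sigma>F) (flags Y) y" using y by simp
  qed
  have iv_eq: "iv m = (\<lambda>_. undefined)" using iv_ext unfolding no_ghost by simp
  have "m = (restrict (vm m) (verts X), restrict (the_inv_into (flags X) \<sigma>F) (flags Y),
             (\<lambda>_. undefined))"
    by (rule mor_eqI) (simp_all only: mor_sel extensional_restrict[OF vm_ext] fm_eq iv_eq)
  then show ?thesis
    unfolding iso_mor_def by (intro exI[of _ "vm m"] exI[of _ \<sigma>F] conjI bV bF inc)
qed

end

text \<open>Removing one ghost pair {s, t} of an admissible morphism X \<rightarrow> Y: the source is contracted
  along \<mu> to X1 (merging the two ends for an edge, doing nothing for a loop), and the rest of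
  the morphism descends to a morphism X1 \<rightarrow> Y with connected fibres and one ghost pair less.\<close>
locale ghost_pair_contraction = admissible X Y \<phi>
  for X Y :: agg and \<phi> :: mor +
  fixes s :: nat and X1 :: agg and \<mu> :: "nat \<Rightarrow> nat"
  assumes ghost_s: "s \<in> ghost_flags X Y \<phi>"
    and agg_X1: "is_agg X1"
    and flags_X1: "flags X1 = flags X - {s, iv \<phi> s}"
    and verts_X1: "verts X1 \<subseteq> verts X"
    and bd_X1: "\<And>f. f \<in> flags X1 \<Longrightarrow> bd X1 f = \<mu> (bd X f)"
    and mu_into: "\<And>a. a \<in> verts X \<Longrightarrow> \<mu> a \<in> verts X1"
    and mu_id: "\<And>a. a \<in> verts X1 \<Longrightarrow> \<mu> a = a"
    and vm_mu: "\<And>a. a \<in> verts X \<Longrightarrow> vm \<phi> (\<mu> a) = vm \<phi> a"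
    and mu_ends: "\<mu> (bd X s) = \<mu> (bd X (iv \<phi> s))"
begin

abbreviation t :: nat where "t \<equiv> iv \<phi> s"

definition contraction :: mor where
  "contraction = (restrict \<mu> (verts X), restrict id (flags X - {s, t}),
                  restrict (\<lambda>x. if x = s then t else s) {s, t})"

definition residual :: mor where
  "residual = (restrict (vm \<phi>) (verts X1), fm \<phi>, restrict (iv \<phi>) (ghost_flags X Y \<phi> - {s, t}))"

lemma ghost_t: "t \<in> ghost_flags X Y \<phi>" and s_neq_t: "s \<noteq> t" and iv_t: "iv \<phi> t = s"
  using iv_ghost[OF ghost_s] iv_no_fix[OF ghost_s] iv_iv[OF ghost_s] by auto

lemma fm_notin_pair: "y \<in> flags Y \<Longrightarrow> fm \<phi> y \<noteq> s \<and> fm \<phi> y \<noteq> t"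
  using ghost_s ghost_t by (force simp: ghost_flags_def)

lemma iv_other_ghost:
  assumes r: "r \<in> ghost_flags X Y \<phi> - {s, t}"
  shows "iv \<phi> r \<in> ghost_flags X Y \<phi> - {s, t}"
proof -
  have "iv \<phi> r \<noteq> s" "iv \<phi> r \<noteq> t" using r iv_iv[of r] iv_t by force+
  then show ?thesis using r iv_ghost by blast
qed

lemma ghost_flags_residual: "ghost_flags X1 Y residual = ghost_flags X Y \<phi> - {s, t}"
  unfolding ghost_flags_def residual_def flags_X1 by auto

lemma vm_residual: "a \<in> verts X \<Longrightarrow> vm residual (\<mu> a) = vm \<phi> a"
  unfolding residual_def using mu_into vm_mu by simp

lemma vm_residual_bd: "f \<in> flags X1 \<Longrightarrow> vm residual (bd X1 f) = vm \<phi> (bd X f)"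
  using bd_X1 vm_residual bd_src flags_X1 by simp

lemma ghost_flags_at_residual:
  "ghost_flags_at X1 Y residual v = ghost_flags_at X Y \<phi> v - {s, t}"
  using vm_residual_bd flags_X1
  unfolding ghost_flags_at_def ghost_flags_residual by (fastforce dest: ghost_flagsD)

lemma fibre_residual: "fibre X1 residual v = fibre X \<phi> v \<inter> verts X1"
  using verts_X1 unfolding fibre_def residual_def by auto

lemma iv_residual: "r \<in> ghost_flags X Y \<phi> - {s, t} \<Longrightarrow> iv residual r = iv \<phi> r"
  by (simp add: residual_def)

lemma ghost_morphism_residual: "ghost_morphism X1 Y residual"
proof unfold_locales
  show "vm residual ` verts X1 = verts Y"
  proof
    show "vm residual ` verts X1 \<subseteq> verts Y" using verts_X1 vm_onto by (auto simp: residual_def)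
    show "verts Y \<subseteq> vm residual ` verts X1"
    proof
      fix v assume "v \<in> verts Y"
      then have "v \<in> vm \<phi> ` verts X" using vm_onto by simp
      then obtain a where "a \<in> verts X" "vm \<phi> a = v" by blast
      then show "v \<in> vm residual ` verts X1" using mu_into vm_residual by (metis image_eqI)
    qed
  qed
  show "fm residual ` flags Y \<subseteq> flags X1"
    using fm_into fm_notin_pair by (auto simp: residual_def flags_X1)
  show "vm residual (bd X1 (fm residual y)) = bd Y y" if y: "y \<in> flags Y" for y
  proof -
    have "fm \<phi> y \<in> flags X1" using y fm_into fm_notin_pair flags_X1 by auto
    then show ?thesis using vm_residual_bd vm_bd_fm[OF y] by (simp add: residual_def)
  qed
  show "iv residual \<in> extensional (ghost_flags X1 Y residual)"
    unfolding ghost_flags_residual by (simp add: residual_def)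
  fix r assume "r \<in> ghost_flags X1 Y residual"
  then have r: "r \<in> ghost_flags X Y \<phi> - {s, t}" unfolding ghost_flags_residual .
  have ir: "iv \<phi> r \<in> ghost_flags X Y \<phi> - {s, t}" using iv_other_ghost[OF r] .
  have X1: "r \<in> flags X1" "iv \<phi> r \<in> flags X1"
    using r ir flags_X1 by (auto dest: ghost_flagsD)
  show "iv residual r \<in> ghost_flags X1 Y residual"
    using ir unfolding iv_residual[OF r] ghost_flags_residual .
  show "iv residual r \<noteq> r" using iv_no_fix r unfolding iv_residual[OF r] by blast
  show "iv residual (iv residual r) = r" using iv_iv r unfolding iv_residual[OF r] iv_residual[OF ir] by blast
  show "vm residual (bd X1 (iv residual r)) = vm residual (bd X1 r)"
    using vm_bd_iv r unfolding iv_residual[OF r] vm_residual_bd[OF X1(1)] vm_residual_bd[OF X1(2)]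
    by blast
qed (use agg_X1 agg_tgt fm_ext fm_inj in \<open>simp_all add: residual_def\<close>)

lemma ghost_edges_residual:
  assumes "(p, q) \<in> ghost_edges X Y \<phi>"
  shows "(\<mu> p, \<mu> q) \<in> (ghost_edges X1 Y residual)\<^sup>*"
proof -
  obtain r where r: "r \<in> ghost_flags X Y \<phi>" and p: "p = bd X r" and q: "q = bd X (iv \<phi> r)"
    using assms by (rule ghost_edgesE)
  show ?thesis
  proof (cases "r \<in> {s, t}")
    case True
    then show ?thesis using p q iv_t mu_ends by auto
  next
    case False
    then have r': "r \<in> ghost_flags X1 Y residual" using r ghost_flags_residual by simp
    have "r \<in> flags X1" "iv \<phi> r \<in> flags X1"
      using r' iv_other_ghost ghost_flags_residual flags_X1 by (auto dest: ghost_flagsD)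
    moreover have "iv residual r = iv \<phi> r" using r' ghost_flags_residual by (simp add: residual_def)
    ultimately show ?thesis using ghost_edgesI[OF r'] p q bd_X1 by auto
  qed
qed

lemma fibre_connected_residual:
  assumes v: "v \<in> verts Y" and x: "x \<in> fibre X1 residual v" and y: "y \<in> fibre X1 residual v"
  shows "(x, y) \<in> (ghost_edges X1 Y residual)\<^sup>*"
proof -
  have xy: "x \<in> fibre X \<phi> v" "y \<in> fibre X \<phi> v" "x \<in> verts X1" "y \<in> verts X1"
    using x y fibre_residual by auto
  have "(\<mu> x, \<mu> y) \<in> (ghost_edges X1 Y residual)\<^sup>*"
    using fibre_connected[OF v xy(1,2)] ghost_edges_residual by (rule rtrancl_map_pairs)
  then show ?thesis using mu_id xy(3,4) by simp
qed

lemma fibre_genus_residual: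
  assumes v: "v \<in> verts Y"
  shows "fibre_genus X1 Y residual v = fibre_genus X Y \<phi> v + int (card (fibre X \<phi> v - verts X1))
           - (if v = vm \<phi> (bd X s) then 1 else 0)"
proof -
  let ?A = "ghost_flags_at X Y \<phi> v"
  obtain k where k: "card ?A = 2 * k" using even_card_ghost_flags_at by blast
  have "card (ghost_flags_at X1 Y residual v) = card ?A - (if v = vm \<phi> (bd X s) then 2 else 0)"
  proof (cases "v = vm \<phi> (bd X s)")
    case True
    then have "{s, t} \<subseteq> ?A" using ghost_s ghost_t vm_bd_iv[OF ghost_s] unfolding ghost_flags_at_def by auto
    then show ?thesis
      using True s_neq_t finite_ghost_flags_at by (simp add: ghost_flags_at_residual card_Diff_subset)
  next
    case False
    then have "s \<notin> ?A" "t \<notin> ?A" using vm_bd_iv[OF ghost_s] unfolding ghost_flags_at_def by auto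
    then show ?thesis using False by (simp add: ghost_flags_at_residual)
  qed
  moreover have "k \<ge> 1" if "v = vm \<phi> (bd X s)"
  proof -
    have "card ?A > 0"
      using that ghost_flags_at_vm[OF ghost_s] finite_ghost_flags_at card_gt_0_iff by blast
    then show ?thesis using k by simp
  qed
  moreover have "card (fibre X \<phi> v) = card (fibre X1 residual v) + card (fibre X \<phi> v - verts X1)"
    using card_Int_Diff[OF finite_fibre] fibre_residual by simp
  ultimately show ?thesis unfolding fibre_genus_def k by auto
qed

lemma admissible_residual:
  "(\<And>v. v \<in> verts Y \<Longrightarrow> 0 \<le> fibre_genus X1 Y residual v) \<Longrightarrow> admissible X1 Y residual"
  by (intro admissible.intro ghost_morphism_residual admissible_axioms.intro fibre_connected_residual)

lemma card_ghost_flags_residual: "card (ghost_flags X1 Y residual) < card (ghost_flags X Y \<phi>)"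
  unfolding ghost_flags_residual
  using ghost_s finite_ghost_flags by (intro psubset_card_mono) auto

lemma mcomp_contraction_residual: "mcomp X X1 Y contraction residual = \<phi>"
proof (rule mor_eqI)
  show "vm (mcomp X X1 Y contraction residual) = vm \<phi>"
  proof
    fix a show "vm (mcomp X X1 Y contraction residual) a = vm \<phi> a"
    proof (cases "a \<in> verts X")
      case True
      then show ?thesis using vm_residual[OF True] by (simp add: mcomp_simps contraction_def)
    qed (simp add: mcomp_simps extensional_arb[OF vm_ext])
  qed
  show "fm (mcomp X X1 Y contraction residual) = fm \<phi>"
  proof
    fix y show "fm (mcomp X X1 Y contraction residual) y = fm \<phi> y"
    proof (cases "y \<in> flags Y")
      case True
      then have "fm \<phi> y \<in> flags X - {s, t}" using fm_into fm_notin_pair by auto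
      then show ?thesis using True by (simp add: mcomp_simps contraction_def residual_def)
    qed (simp add: mcomp_simps extensional_arb[OF fm_ext])
  qed
  have image_fm: "fm contraction ` fm residual ` flags Y = fm \<phi> ` flags Y"
    using fm_into fm_notin_pair by (auto simp: contraction_def residual_def image_iff)
  have image_flags: "fm contraction ` flags X1 = flags X - {s, t}"
    by (auto simp: contraction_def flags_X1)
  have dom: "flags X - fm contraction ` fm residual ` flags Y = ghost_flags X Y \<phi>"
    unfolding image_fm ghost_flags_def ..
  show "iv (mcomp X X1 Y contraction residual) = iv \<phi>"
  proof
    fix a
    consider (other) "a \<in> ghost_flags X Y \<phi> - {s, t}" | (pair) "a \<in> {s, t}"
      | (no_ghost) "a \<notin> ghost_flags X Y \<phi>"
      using ghost_s ghost_t by blast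
    then show "iv (mcomp X X1 Y contraction residual) a = iv \<phi> a"
    proof cases
      case other
      then have aX1: "a \<in> flags X1" using flags_X1 by (auto dest: ghost_flagsD)
      then have image: "a \<in> fm contraction ` flags X1" using image_flags flags_X1 by simp
      have inv: "the_inv_into (flags X1) (fm contraction) a = a"
        using aX1 by (intro the_inv_into_f_eq) (auto simp: inj_on_def contraction_def flags_X1)
      have "iv \<phi> a \<in> flags X1"
        using iv_other_ghost[OF other] flags_X1 by (auto dest: ghost_flagsD)
      then have "fm contraction (iv \<phi> a) = iv \<phi> a" using flags_X1 by (simp add: contraction_def)
      then show ?thesis
        unfolding mcomp_simps dom using other image inv iv_residual[OF other] by simp
    next
      case pair
      then have "a \<in> ghost_flags X Y \<phi>" "a \<notin> fm contraction ` flags X1"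
        using ghost_s ghost_t unfolding image_flags by auto
      then show ?thesis
        unfolding mcomp_simps dom using pair iv_t s_neq_t by (auto simp: contraction_def)
    next
      case no_ghost
      then show ?thesis
        unfolding mcomp_simps dom by (simp add: extensional_arb[OF iv_ext])
    qed
  qed
qed

end

lemma edge_contraction_step:
  assumes adm: "admissible X Y \<phi>" and s: "s \<in> ghost_flags X Y \<phi>"
    and ne: "bd X s \<noteq> bd X (iv \<phi> s)"
  defines "X1 \<equiv> edge_target X s (iv \<phi> s)"
  obtains \<phi>1 where "admissible X1 Y \<phi>1" "mcomp X X1 Y (edge_mor X s (iv \<phi> s)) \<phi>1 = \<phi>"
    "card (ghost_flags X1 Y \<phi>1) < card (ghost_flags X Y \<phi>)" "card (verts X1) < card (verts X)"
proof -
  interpret admissible X Y \<phi> by (rule adm)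
  let ?t = "iv \<phi> s"
  have ok: "edge_ok X s ?t" using s iv_ghost ne unfolding edge_ok_def by (blast dest: ghost_flagsD)
  have bs: "bd X s \<in> verts X" and bt: "bd X ?t \<in> verts X"
    using ok bd_src unfolding edge_ok_def by auto
  interpret ghost_pair_contraction X Y \<phi> s X1 "\<lambda>v. if v = bd X ?t then bd X s else v"
    using s is_agg_edge_target[OF agg_src ok] bs ne vm_bd_iv[OF s] unfolding X1_def
    by unfold_locales auto
  have "contraction = edge_mor X s ?t" by (simp add: contraction_def edge_mor_def)
  moreover have "card (verts X1) < card (verts X)"
    unfolding X1_def edge_target_simps by (rule card_Diff1_less[OF is_aggD(2)[OF agg_src] bt])
  moreover have "admissible X1 Y residual"
  proof (rule admissible_residual)
    fix v assume v: "v \<in> verts Y"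
    have "fibre X \<phi> v - verts X1 = (if v = vm \<phi> (bd X s) then {bd X ?t} else {})"
      using bt vm_bd_iv[OF s] unfolding X1_def fibre_def by auto
    then show "0 \<le> fibre_genus X1 Y residual v"
      using fibre_genus_residual[OF v] fibre_genus_nonneg[OF v] by (simp split: if_splits)
  qed
  ultimately show ?thesis using that mcomp_contraction_residual card_ghost_flags_residual by simp
qed

lemma loop_contraction_step:
  assumes adm: "admissible X Y \<phi>" and s: "s \<in> ghost_flags X Y \<phi>"
    and loops: "\<forall>r\<in>ghost_flags X Y \<phi>. bd X (iv \<phi> r) = bd X r"
  defines "X1 \<equiv> loop_target X s (iv \<phi> s)"
  obtains \<phi>1 where "admissible X1 Y \<phi>1" "mcomp X X1 Y (loop_mor X s (iv \<phi> s)) \<phi>1 = \<phi>"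
    "card (ghost_flags X1 Y \<phi>1) < card (ghost_flags X Y \<phi>)"
proof -
  interpret admissible X Y \<phi> by (rule adm)
  interpret ghost_pair_contraction X Y \<phi> s X1 id
    using s is_agg_loop_target[OF agg_src] loops unfolding X1_def by unfold_locales auto
  have "contraction = loop_mor X s (iv \<phi> s)" by (simp add: contraction_def loop_mor_def)
  moreover have "admissible X1 Y residual"
  proof (rule admissible_residual)
    fix v assume v: "v \<in> verts Y"
    have "1 \<le> fibre_genus X Y \<phi> v" if v0: "v = vm \<phi> (bd X s)"
    proof -
      have "card (ghost_flags_at X Y \<phi> v) \<noteq> 0"
        using v0 ghost_flags_at_vm[OF s] finite_ghost_flags_at by auto
      then have "1 \<le> card (ghost_flags_at X Y \<phi> v) div 2"
        using even_card_ghost_flags_at[of v] by (auto elim!: evenE)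
      then show ?thesis using card_fibre_if_ghost_loops[OF loops v] unfolding fibre_genus_def by simp
    qed
    then show "0 \<le> fibre_genus X1 Y residual v"
      using fibre_genus_residual[OF v] fibre_genus_nonneg[OF v] unfolding X1_def
      by (simp split: if_splits)
  qed
  ultimately show ?thesis using that mcomp_contraction_residual card_ghost_flags_residual by simp
qed

text \<open>Conversely every admissible morphism lies in Agg^ctd: peel off ghost pairs, first the
  non-loops by edge contractions, then the loops, which now sit at a vertex that is alone in
  its fibre and hence has positive fibre genus to spare.\<close>
lemma ctd_if_admissible: "admissible X Y \<phi> \<Longrightarrow> ctd X Y \<phi>"
proof (induction "card (ghost_flags X Y \<phi>)" arbitrary: X \<phi> rule: less_induct)
  case less
  interpret admissible X Y \<phi> by (rule less.prems)
  consider (iso) "ghost_flags X Y \<phi> = {}"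
    | (edge) s where "s \<in> ghost_flags X Y \<phi>" "bd X s \<noteq> bd X (iv \<phi> s)"
    | (loop) s where "s \<in> ghost_flags X Y \<phi>" "\<forall>r\<in>ghost_flags X Y \<phi>. bd X (iv \<phi> r) = bd X r"
    by (metis ex_in_conv)
  then show ?case
  proof cases
    case iso
    show ?thesis by (rule ctd_iso[OF agg_src agg_tgt iso_mor_if_no_ghost_flags[OF iso]])
  next
    case edge
    have "iv \<phi> s \<in> flags X" using edge(1) iv_ghost ghost_flagsD by blast
    then have ok: "edge_ok X s (iv \<phi> s)" using edge ghost_flagsD unfolding edge_ok_def by blast
    obtain \<phi>1 where adm: "admissible (edge_target X s (iv \<phi> s)) Y \<phi>1"
      and comp: "mcomp X (edge_target X s (iv \<phi> s)) Y (edge_mor X s (iv \<phi> s)) \<phi>1 = \<phi>"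
      and card: "card (ghost_flags (edge_target X s (iv \<phi> s)) Y \<phi>1) < card (ghost_flags X Y \<phi>)"
      using edge_contraction_step[OF less.prems edge] .
    show ?thesis using ctd_comp[OF ctd_edge[OF agg_src ok] less.hyps[OF card adm]] unfolding comp .
  next
    case loop
    have "iv \<phi> s \<in> flags X" using loop(1) iv_ghost ghost_flagsD by blast
    then have ok: "loop_ok X s (iv \<phi> s)"
      using loop iv_no_fix[OF loop(1)] ghost_flagsD unfolding loop_ok_def by metis
    obtain \<phi>1 where adm: "admissible (loop_target X s (iv \<phi> s)) Y \<phi>1"
      and comp: "mcomp X (loop_target X s (iv \<phi> s)) Y (loop_mor X s (iv \<phi> s)) \<phi>1 = \<phi>"
      and card: "card (ghost_flags (loop_target X s (iv \<phi> s)) Y \<phi>1) < card (ghost_flags X Y \<phi>)"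
      using loop_contraction_step[OF less.prems loop] .
    show ?thesis using ctd_comp[OF ctd_loop[OF agg_src ok] less.hyps[OF card adm]] unfolding comp .
  qed
qed

section \<open>The canonical morphism of a given genus\<close>

text \<open>The canonical aggregate over Y of genus g is Y with g v ghost loops added at each vertex v.
  Its new flags are numbered above all flags of Y as fresh_base + 2 * \<langle>v, k\<rangle> + b, so that the
  vertex can be decoded from the flag and the ghost involution just toggles the parity bit b.\<close>
definition fresh_base :: "agg \<Rightarrow> nat" where
  "fresh_base Y = Suc (Max (insert 0 (flags Y)))"

definition fresh_flag :: "agg \<Rightarrow> nat \<Rightarrow> nat \<Rightarrow> nat \<Rightarrow> nat" where
  "fresh_flag Y v k b = fresh_base Y + 2 * prod_encode (v, k) + b"

definition fresh_flags :: "agg \<Rightarrow> (nat \<Rightarrow> nat) \<Rightarrow> nat set" where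
  "fresh_flags Y g = {fresh_flag Y v k b | v k b. v \<in> verts Y \<and> k < g v \<and> b < 2}"

definition canonical_bd :: "agg \<Rightarrow> nat \<Rightarrow> nat" where
  "canonical_bd Y f =
     (if f \<in> flags Y then bd Y f else fst (prod_decode ((f - fresh_base Y) div 2)))"

definition canonical_iv :: "agg \<Rightarrow> nat \<Rightarrow> nat" where
  "canonical_iv Y f = (if even (f - fresh_base Y) then f + 1 else f - 1)"

definition canonical_agg :: "agg \<Rightarrow> (nat \<Rightarrow> nat) \<Rightarrow> agg" where
  "canonical_agg Y g = (flags Y \<union> fresh_flags Y g, verts Y,
                        restrict (canonical_bd Y) (flags Y \<union> fresh_flags Y g))"

definition canonical_mor :: "agg \<Rightarrow> (nat \<Rightarrow> nat) \<Rightarrow> mor" where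
  "canonical_mor Y g = (restrict id (verts Y), restrict id (flags Y),
                        restrict (canonical_iv Y) (fresh_flags Y g))"

lemma canonical_agg_simps [simp]:
  "flags (canonical_agg Y g) = flags Y \<union> fresh_flags Y g" "verts (canonical_agg Y g) = verts Y"
  "bd (canonical_agg Y g) = restrict (canonical_bd Y) (flags Y \<union> fresh_flags Y g)"
  unfolding canonical_agg_def by auto

lemma canonical_mor_simps [simp]:
  "vm (canonical_mor Y g) = restrict id (verts Y)" "fm (canonical_mor Y g) = restrict id (flags Y)"
  "iv (canonical_mor Y g) = restrict (canonical_iv Y) (fresh_flags Y g)"
  unfolding canonical_mor_def by auto

lemma fresh_flag_inj:
  assumes "b < 2" "b' < 2" "fresh_flag Y v k b = fresh_flag Y v' k' b'"
  shows "v = v'" "k = k'" "b = b'"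
proof -
  have "prod_encode (v, k) = prod_encode (v', k') \<and> b = b'"
    using assms unfolding fresh_flag_def by presburger
  then show "v = v'" "k = k'" "b = b'" by (auto dest: inj_onD[OF inj_prod_encode])
qed

lemma fresh_flag_notin_flags:
  assumes "finite (flags Y)" shows "fresh_flag Y v k b \<notin> flags Y"
proof
  assume "fresh_flag Y v k b \<in> flags Y"
  then have "fresh_flag Y v k b \<le> Max (insert 0 (flags Y))" using assms by simp
  then show False unfolding fresh_flag_def fresh_base_def by simp
qed

lemma flags_disjoint_fresh_flags: "finite (flags Y) \<Longrightarrow> flags Y \<inter> fresh_flags Y g = {}"
  unfolding fresh_flags_def using fresh_flag_notin_flags by blast

lemma canonical_bd_fresh_flag: "b < 2 \<Longrightarrow> finite (flags Y) \<Longrightarrow> canonical_bd Y (fresh_flag Y v k b) = v"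
  using fresh_flag_notin_flags unfolding canonical_bd_def by (simp add: fresh_flag_def)

lemma canonical_iv_fresh_flag: "b < 2 \<Longrightarrow> canonical_iv Y (fresh_flag Y v k b) = fresh_flag Y v k (1 - b)"
  unfolding canonical_iv_def fresh_flag_def by (cases b) auto

lemma finite_fresh_flags: "finite (verts Y) \<Longrightarrow> finite (fresh_flags Y g)"
proof -
  assume fin: "finite (verts Y)"
  have "fresh_flags Y g = (\<lambda>(v, k, b). fresh_flag Y v k b) ` (SIGMA v:verts Y. {..<g v} \<times> {..<2})"
    unfolding fresh_flags_def by force
  then show ?thesis using fin by simp
qed

context
  fixes Y :: agg and g :: "nat \<Rightarrow> nat"
  assumes agg_Y: "is_agg Y"
begin

lemma ghost_flags_canonical: "ghost_flags (canonical_agg Y g) Y (canonical_mor Y g) = fresh_flags Y g"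
  using flags_disjoint_fresh_flags[OF is_aggD(1)[OF agg_Y]] unfolding ghost_flags_def by auto

lemma bd_canonical_fresh_flag:
  "fresh_flag Y v k b \<in> fresh_flags Y g \<Longrightarrow> b < 2 \<Longrightarrow> bd (canonical_agg Y g) (fresh_flag Y v k b) = v"
  using canonical_bd_fresh_flag[OF _ is_aggD(1)[OF agg_Y]] by simp

lemma ghost_flags_at_canonical:
  assumes v: "v \<in> verts Y"
  shows "ghost_flags_at (canonical_agg Y g) Y (canonical_mor Y g) v =
         (\<lambda>(k, b). fresh_flag Y v k b) ` ({..<g v} \<times> {..<2})"
proof (intro equalityI subsetI)
  fix s assume "s \<in> ghost_flags_at (canonical_agg Y g) Y (canonical_mor Y g) v"
  then obtain w k b where s: "w \<in> verts Y" "k < g w" "b < 2" "s = fresh_flag Y w k b"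
    and sv: "vm (canonical_mor Y g) (bd (canonical_agg Y g) s) = v"
    unfolding ghost_flags_at_def ghost_flags_canonical fresh_flags_def by blast
  then have "s \<in> fresh_flags Y g" unfolding fresh_flags_def by blast
  then have "w = v" using s sv bd_canonical_fresh_flag by simp
  then show "s \<in> (\<lambda>(k, b). fresh_flag Y v k b) ` ({..<g v} \<times> {..<2})" using s by auto
next
  fix s assume "s \<in> (\<lambda>(k, b). fresh_flag Y v k b) ` ({..<g v} \<times> {..<2})"
  then obtain k b where kb: "k < g v" "b < 2" "s = fresh_flag Y v k b" by auto
  then have "s \<in> fresh_flags Y g" using v unfolding fresh_flags_def by blast
  then show "s \<in> ghost_flags_at (canonical_agg Y g) Y (canonical_mor Y g) v"
    using kb v bd_canonical_fresh_flag unfolding ghost_flags_at_def ghost_flags_canonical by simp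
qed

lemma fibre_genus_canonical:
  "v \<in> verts Y \<Longrightarrow> fibre_genus (canonical_agg Y g) Y (canonical_mor Y g) v = int (g v)"
proof -
  assume v: "v \<in> verts Y"
  have "inj_on (\<lambda>(k, b). fresh_flag Y v k b) ({..<g v} \<times> {..<2})"
    by (rule inj_onI) (auto dest: fresh_flag_inj)
  then have "card (ghost_flags_at (canonical_agg Y g) Y (canonical_mor Y g) v) = 2 * g v"
    unfolding ghost_flags_at_canonical[OF v] by (simp add: card_image card_cartesian_product)
  moreover have "fibre (canonical_agg Y g) (canonical_mor Y g) v = {v}"
    using v unfolding fibre_def by auto
  ultimately show ?thesis unfolding fibre_genus_def by simp
qed

lemma is_agg_canonical: "is_agg (canonical_agg Y g)"
  unfolding is_agg_def
proof (intro conjI)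
  show "finite (flags (canonical_agg Y g))"
    using is_aggD(1)[OF agg_Y] finite_fresh_flags[OF is_aggD(2)[OF agg_Y]] by simp
  show "bd (canonical_agg Y g) ` flags (canonical_agg Y g) \<subseteq> verts (canonical_agg Y g)"
  proof
    fix x assume "x \<in> bd (canonical_agg Y g) ` flags (canonical_agg Y g)"
    then obtain f where f: "f \<in> flags Y \<union> fresh_flags Y g" "x = canonical_bd Y f" by auto
    show "x \<in> verts (canonical_agg Y g)"
    proof (cases "f \<in> flags Y")
      case True
      then show ?thesis using f is_aggD(3)[OF agg_Y] by (simp add: canonical_bd_def)
    next
      case False
      then obtain v k b where "v \<in> verts Y" "b < 2" "f = fresh_flag Y v k b"
        using f unfolding fresh_flags_def by blast
      then show ?thesis using f canonical_bd_fresh_flag[OF _ is_aggD(1)[OF agg_Y]] by simp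
    qed
  qed
qed (use is_aggD(2)[OF agg_Y] in simp_all)

lemma admissible_canonical: "admissible (canonical_agg Y g) Y (canonical_mor Y g)"
proof unfold_locales
  show "is_agg (canonical_agg Y g)" by (rule is_agg_canonical)
  show "vm (canonical_mor Y g) (bd (canonical_agg Y g) (fm (canonical_mor Y g) y)) = bd Y y"
    if "y \<in> flags Y" for y
    using that is_aggD(3)[OF agg_Y] by (simp add: canonical_bd_def)
  show "vm (canonical_mor Y g) ` verts (canonical_agg Y g) = verts Y" by simp
  show "fm (canonical_mor Y g) ` flags Y \<subseteq> flags (canonical_agg Y g)" by auto
  show "iv (canonical_mor Y g) \<in> extensional (ghost_flags (canonical_agg Y g) Y (canonical_mor Y g))"
    unfolding ghost_flags_canonical by simp
  show "0 \<le> fibre_genus (canonical_agg Y g) Y (canonical_mor Y g) v" if "v \<in> verts Y" for v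
    using fibre_genus_canonical[OF that] by simp
  show "(x, y) \<in> (ghost_edges (canonical_agg Y g) Y (canonical_mor Y g))\<^sup>*"
    if "x \<in> fibre (canonical_agg Y g) (canonical_mor Y g) v"
      "y \<in> fibre (canonical_agg Y g) (canonical_mor Y g) v" for v x y
    using that unfolding fibre_def by auto
  fix s assume "s \<in> ghost_flags (canonical_agg Y g) Y (canonical_mor Y g)"
  then have s_fresh: "s \<in> fresh_flags Y g" unfolding ghost_flags_canonical .
  then obtain v k b where s: "v \<in> verts Y" "k < g v" "b < 2" "s = fresh_flag Y v k b"
    unfolding fresh_flags_def by blast
  let ?s' = "fresh_flag Y v k (1 - b)"
  have b': "1 - b < 2" "1 - (1 - b) = b" using s(3) by arith+
  have s'_fresh: "?s' \<in> fresh_flags Y g" using s b' unfolding fresh_flags_def by blast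
  have iv_s: "iv (canonical_mor Y g) s = ?s'"
    using s_fresh canonical_iv_fresh_flag[OF s(3)] s(4) by simp
  have iv_s': "iv (canonical_mor Y g) ?s' = s"
    using s'_fresh canonical_iv_fresh_flag[OF b'(1)] b'(2) s(4) by simp
  have bd: "bd (canonical_agg Y g) s = v" "bd (canonical_agg Y g) ?s' = v"
    using bd_canonical_fresh_flag s_fresh s'_fresh s(3,4) b'(1) by auto
  show "iv (canonical_mor Y g) s \<in> ghost_flags (canonical_agg Y g) Y (canonical_mor Y g)"
    unfolding iv_s ghost_flags_canonical by (rule s'_fresh)
  show "iv (canonical_mor Y g) s \<noteq> s"
  proof
    assume "iv (canonical_mor Y g) s = s"
    then have "?s' = fresh_flag Y v k b" using iv_s s(4) by simp
    then have "1 - b = b" by (rule fresh_flag_inj(3)[OF b'(1) s(3)])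
    then show False using s(3) by arith
  qed
  show "iv (canonical_mor Y g) (iv (canonical_mor Y g) s) = s" unfolding iv_s by (rule iv_s')
  show "vm (canonical_mor Y g) (bd (canonical_agg Y g) (iv (canonical_mor Y g) s)) =
        vm (canonical_mor Y g) (bd (canonical_agg Y g) s)"
    unfolding iv_s bd ..
qed (simp_all add: agg_Y inj_on_def)

end

definition genus :: "agg \<Rightarrow> agg \<Rightarrow> mor \<Rightarrow> nat \<Rightarrow> nat" where
  "genus X Y \<phi> = restrict (\<lambda>v. nat (fibre_genus X Y \<phi> v)) (verts Y)"

lemma genus_in_genus_ob: "genus X Y \<phi> \<in> genus_ob Y"
  unfolding genus_def genus_ob_def by simp

lemma (in admissible) int_genus: "v \<in> verts Y \<Longrightarrow> int (genus X Y m v) = fibre_genus X Y m v"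
  unfolding genus_def using fibre_genus_nonneg by simp

lemma genus_canonical:
  assumes "is_agg Y" "g \<in> extensional (verts Y)"
  shows "genus (canonical_agg Y g) Y (canonical_mor Y g) = g"
proof (rule extensionalityI[OF _ assms(2)])
  show "genus (canonical_agg Y g) Y (canonical_mor Y g) \<in> extensional (verts Y)"
    unfolding genus_def by simp
qed (simp add: genus_def fibre_genus_canonical[OF assms(1)])

lemma genus_forest_mcomp:
  assumes "forest X X' \<psi>" "ctd X' Y \<phi>"
  shows "genus X Y (mcomp X X' Y \<psi> \<phi>) = genus X' Y \<phi>"
proof -
  interpret ghost_composable X X' Y \<psi> \<phi>
    using ghost_morphism_if_ctd[OF ctd_if_forest[OF assms(1)]] ghost_morphism_if_ctd[OF assms(2)]
    by (rule ghost_composable.intro)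
  have "(\<Sum>w\<in>fibre X' \<phi> v. fibre_genus X X' \<psi> w) = 0" for v
    using fibre_genus_forest[OF assms(1)] fibre_subset by (blast intro: sum.neutral)
  then show ?thesis unfolding genus_def using fibre_genus_mcomp by (intro restrict_ext) simp
qed

lemma (in admissible) card_ghost_pair_reps:
  assumes loops: "\<forall>s\<in>ghost_flags X Y m. bd X (iv m s) = bd X s" and v: "v \<in> verts Y"
  shows "card {s \<in> ghost_flags_at X Y m v. s < iv m s} = genus X Y m v"
  using card_ghost_flags_at[of v] card_fibre_if_ghost_loops[OF loops v] v
  unfolding genus_def fibre_genus_def by simp

text \<open>If all ghost edges of an admissible \<phi> are loops, X is isomorphic over Y to the canonical
  aggregate of the same genus: number the ghost pairs over each v by h v, using the smaller
  flag of each pair as its representative, and send the smaller/larger flag of pair k to the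
  fresh flag with parity bit 0/1.\<close>
locale ghost_loop_relabelling = admissible X Y \<phi> for X Y :: agg and \<phi> :: mor +
  fixes h :: "nat \<Rightarrow> nat \<Rightarrow> nat"
  assumes ghost_loops: "\<forall>s\<in>ghost_flags X Y \<phi>. bd X (iv \<phi> s) = bd X s"
    and h_bij: "\<And>v. v \<in> verts Y \<Longrightarrow>
      bij_betw (h v) {s \<in> ghost_flags_at X Y \<phi> v. s < iv \<phi> s} {..<genus X Y \<phi> v}"
begin

abbreviation Xc :: agg where "Xc \<equiv> canonical_agg Y (genus X Y \<phi>)"

definition relabel :: "nat \<Rightarrow> nat" where
  "relabel s =
     (if s \<in> fm \<phi> ` flags Y then the_inv_into (flags Y) (fm \<phi>) s
      else fresh_flag Y (vm \<phi> (bd X s)) (h (vm \<phi> (bd X s)) (min s (iv \<phi> s)))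
             (if s < iv \<phi> s then 0 else 1))"

definition relabel_mor :: mor where
  "relabel_mor = (restrict (vm \<phi>) (verts X), restrict (the_inv_into (flags X) relabel) (flags Xc),
                  (\<lambda>_. undefined))"

lemma relabel_fm: "y \<in> flags Y \<Longrightarrow> relabel (fm \<phi> y) = y"
  unfolding relabel_def using the_inv_into_f_f[OF fm_inj] by auto

lemma min_ghost_pair_rep:
  assumes s: "s \<in> ghost_flags X Y \<phi>"
  shows "min s (iv \<phi> s) \<in> {r \<in> ghost_flags_at X Y \<phi> (vm \<phi> (bd X s)). r < iv \<phi> r}"
  using s ghost_flags_at_vm[OF s] iv_ghost_flags_at[OF ghost_flags_at_vm[OF s]] iv_no_fix[OF s]
    iv_iv[OF s]
  by (auto simp: min_def)

lemma h_less_genus: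
  assumes s: "s \<in> ghost_flags X Y \<phi>"
  shows "h (vm \<phi> (bd X s)) (min s (iv \<phi> s)) < genus X Y \<phi> (vm \<phi> (bd X s))"
  using h_bij[OF vm_bd_ghost[OF s]] min_ghost_pair_rep[OF s] by (auto simp: bij_betw_def)

lemma relabel_ghost:
  assumes s: "s \<in> ghost_flags X Y \<phi>"
  shows "relabel s = fresh_flag Y (vm \<phi> (bd X s)) (h (vm \<phi> (bd X s)) (min s (iv \<phi> s)))
                       (if s < iv \<phi> s then 0 else 1)"
  using s unfolding relabel_def ghost_flags_def by auto

lemma relabel_ghost_fresh: "s \<in> ghost_flags X Y \<phi> \<Longrightarrow> relabel s \<in> fresh_flags Y (genus X Y \<phi>)"
  unfolding relabel_ghost fresh_flags_def using vm_bd_ghost h_less_genus by fastforce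

lemma canonical_iv_relabel:
  assumes s: "s \<in> ghost_flags X Y \<phi>"
  shows "canonical_iv Y (relabel s) = relabel (iv \<phi> s)"
proof -
  have "iv \<phi> s \<noteq> s" "iv \<phi> (iv \<phi> s) = s" using iv_no_fix[OF s] iv_iv[OF s] by auto
  then show ?thesis
    unfolding relabel_ghost[OF s] relabel_ghost[OF iv_ghost[OF s]] vm_bd_iv[OF s]
    by (auto simp: canonical_iv_fresh_flag min.commute)
qed

lemma inj_on_relabel: "inj_on relabel (flags X)"
proof (rule inj_onI)
  fix a b assume a: "a \<in> flags X" and b: "b \<in> flags X" and ab: "relabel a = relabel b"
  have fresh_notin: "relabel s \<notin> flags Y" if "s \<in> ghost_flags X Y \<phi>" for s
    using relabel_ghost_fresh[OF that] flags_disjoint_fresh_flags[OF is_aggD(1)[OF agg_tgt]] by blast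
  consider (fm) "a \<in> fm \<phi> ` flags Y" "b \<in> fm \<phi> ` flags Y"
    | (ghost) "a \<in> ghost_flags X Y \<phi>" "b \<in> ghost_flags X Y \<phi>"
    | (mixed) "a \<in> fm \<phi> ` flags Y \<and> b \<in> ghost_flags X Y \<phi> \<or>
               b \<in> fm \<phi> ` flags Y \<and> a \<in> ghost_flags X Y \<phi>"
    using a b unfolding flags_src by blast
  then show "a = b"
  proof cases
    case fm
    then show ?thesis using ab relabel_fm by auto
  next
    case mixed
    then show ?thesis using ab relabel_fm fresh_notin by auto
  next
    case ghost
    let ?va = "vm \<phi> (bd X a)" and ?vb = "vm \<phi> (bd X b)"
    let ?ra = "min a (iv \<phi> a)" and ?rb = "min b (iv \<phi> b)"
    let ?ba = "if a < iv \<phi> a then 0 else 1 :: nat" and ?bb = "if b < iv \<phi> b then 0 else 1 :: nat"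
    have ff: "fresh_flag Y ?va (h ?va ?ra) ?ba = fresh_flag Y ?vb (h ?vb ?rb) ?bb"
      using ab unfolding relabel_ghost[OF ghost(1)] relabel_ghost[OF ghost(2)] .
    have bits: "?ba < 2" "?bb < 2" by simp_all
    note eq = fresh_flag_inj[OF bits ff]
    have "h ?va ?ra = h ?va ?rb" using eq(1,2) by simp
    moreover have "?rb \<in> {r \<in> ghost_flags_at X Y \<phi> ?va. r < iv \<phi> r}"
      using min_ghost_pair_rep[OF ghost(2)] eq(1) by simp
    ultimately have rep: "?ra = ?rb"
      using inj_onD[OF bij_betw_imp_inj_on[OF h_bij[OF vm_bd_ghost[OF ghost(1)]]]]
        min_ghost_pair_rep[OF ghost(1)] by blast
    have bit: "(a < iv \<phi> a) = (b < iv \<phi> b)" using eq(3) by presburger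
    show ?thesis
    proof (cases "a < iv \<phi> a")
      case True
      then show ?thesis using rep bit by (simp add: min_def)
    next
      case False
      then have "iv \<phi> a < a" "iv \<phi> b < b"
        using bit iv_no_fix[OF ghost(1)] iv_no_fix[OF ghost(2)] by simp_all
      then have "iv \<phi> a = iv \<phi> b" using rep by (simp add: min_def)
      then show ?thesis using iv_iv[OF ghost(1)] iv_iv[OF ghost(2)] by metis
    qed
  qed
qed

lemma relabel_image: "relabel ` flags X = flags Xc"
proof (intro equalityI subsetI)
  fix x assume "x \<in> relabel ` flags X"
  then obtain a where a: "a \<in> flags X" "x = relabel a" by blast
  then show "x \<in> flags Xc"
    using relabel_fm relabel_ghost_fresh unfolding flags_src by auto
next
  fix x assume x: "x \<in> flags Xc"
  show "x \<in> relabel ` flags X"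
  proof (cases "x \<in> flags Y")
    case True
    show ?thesis
      by (rule image_eqI[where x = "fm \<phi> x"]) (use True fm_into relabel_fm in auto)
  next
    case False
    then have "x \<in> fresh_flags Y (genus X Y \<phi>)" using x by simp
    then obtain v k b where v: "v \<in> verts Y" and kb: "k < genus X Y \<phi> v" "b < 2"
      and x_eq: "x = fresh_flag Y v k b"
      unfolding fresh_flags_def by blast
    have "k \<in> h v ` {r \<in> ghost_flags_at X Y \<phi> v. r < iv \<phi> r}"
      using h_bij[OF v] kb(1) by (simp add: bij_betw_def)
    then obtain r where r: "r \<in> ghost_flags_at X Y \<phi> v" "r < iv \<phi> r" "h v r = k" by blast
    have rg: "r \<in> ghost_flags X Y \<phi>" and rv: "vm \<phi> (bd X r) = v"
      using r(1) unfolding ghost_flags_at_def by auto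
    have "relabel r = fresh_flag Y v k 0" using relabel_ghost[OF rg] r rv by (simp add: min_def)
    moreover have "relabel (iv \<phi> r) = fresh_flag Y v k 1"
      using relabel_ghost[OF iv_ghost[OF rg]] r rv vm_bd_iv[OF rg] iv_iv[OF rg]
      by (simp add: min_def)
    moreover have "r \<in> flags X" "iv \<phi> r \<in> flags X" using rg iv_ghost[OF rg] by (blast dest: ghost_flagsD)+
    moreover have "b = 0 \<or> b = 1" using kb(2) by arith
    ultimately show ?thesis using x_eq by (metis image_eqI)
  qed
qed

lemma bij_betw_relabel: "bij_betw relabel (flags X) (flags Xc)"
  using inj_on_relabel relabel_image by (simp add: bij_betw_def)

lemma iso_mor_relabel_mor: "iso_mor X Xc relabel_mor"
  unfolding iso_mor_def relabel_mor_def
proof (intro exI conjI)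
  show "bij_betw (vm \<phi>) (verts X) (verts Xc)"
    using inj_on_vm_if_ghost_loops[OF ghost_loops] vm_onto by (simp add: bij_betw_def)
  show "bij_betw relabel (flags X) (flags Xc)" by (rule bij_betw_relabel)
  show "\<forall>f\<in>flags X. bd Xc (relabel f) = vm \<phi> (bd X f)"
  proof
    fix f assume f: "f \<in> flags X"
    have "relabel f \<in> flags Xc" using f relabel_image by blast
    moreover have "canonical_bd Y (relabel f) = vm \<phi> (bd X f)"
    proof (cases "f \<in> ghost_flags X Y \<phi>")
      case True
      then show ?thesis unfolding relabel_ghost[OF True]
        by (simp add: canonical_bd_fresh_flag[OF _ is_aggD(1)[OF agg_tgt]])
    next
      case False
      then obtain y where "y \<in> flags Y" "f = fm \<phi> y" using f unfolding flags_src by blast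
      then show ?thesis using relabel_fm vm_bd_fm by (simp add: canonical_bd_def)
    qed
    ultimately show "bd Xc (relabel f) = vm \<phi> (bd X f)" by simp
  qed
qed simp

lemma fm_relabel_mor_relabel: "f \<in> flags X \<Longrightarrow> fm relabel_mor (relabel f) = f"
  using the_inv_into_f_f[OF inj_on_relabel] relabel_image unfolding relabel_mor_def by auto

lemma fm_relabel_mor: "y \<in> flags Y \<Longrightarrow> fm relabel_mor y = fm \<phi> y"
  using fm_relabel_mor_relabel[of "fm \<phi> y"] relabel_fm fm_into by auto

lemma mcomp_relabel_mor: "mcomp X Xc Y relabel_mor (canonical_mor Y (genus X Y \<phi>)) = \<phi>"
proof (rule mor_eqI)
  show "vm (mcomp X Xc Y relabel_mor (canonical_mor Y (genus X Y \<phi>))) = vm \<phi>"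
  proof
    fix a show "vm (mcomp X Xc Y relabel_mor (canonical_mor Y (genus X Y \<phi>))) a = vm \<phi> a"
    proof (cases "a \<in> verts X")
      case True
      then show ?thesis using vm_onto by (auto simp: mcomp_simps relabel_mor_def)
    qed (simp add: mcomp_simps extensional_arb[OF vm_ext])
  qed
  show "fm (mcomp X Xc Y relabel_mor (canonical_mor Y (genus X Y \<phi>))) = fm \<phi>"
  proof
    fix y show "fm (mcomp X Xc Y relabel_mor (canonical_mor Y (genus X Y \<phi>))) y = fm \<phi> y"
    proof (cases "y \<in> flags Y")
      case True
      then show ?thesis using fm_relabel_mor[OF True] by (simp add: mcomp_simps)
    qed (simp add: mcomp_simps extensional_arb[OF fm_ext])
  qed
  have image_fm: "fm relabel_mor ` fm (canonical_mor Y (genus X Y \<phi>)) ` flags Y = fm \<phi> ` flags Y"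
    using fm_relabel_mor by (simp add: image_image cong: image_cong)
  have image_flags: "fm relabel_mor ` flags Xc = flags X"
    using fm_relabel_mor_relabel relabel_image[symmetric] by (simp add: image_image cong: image_cong)
  have dom: "flags X - fm relabel_mor ` fm (canonical_mor Y (genus X Y \<phi>)) ` flags Y =
             ghost_flags X Y \<phi>"
    unfolding image_fm ghost_flags_def ..
  have inj: "inj_on (fm relabel_mor) (flags Xc)"
    using inj_on_the_inv_into[OF inj_on_relabel] relabel_image
    unfolding relabel_mor_def by (simp add: inj_on_def)
  show "iv (mcomp X Xc Y relabel_mor (canonical_mor Y (genus X Y \<phi>))) = iv \<phi>"
  proof
    fix a
    show "iv (mcomp X Xc Y relabel_mor (canonical_mor Y (genus X Y \<phi>))) a = iv \<phi> a"
    proof (cases "a \<in> ghost_flags X Y \<phi>")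
      case True
      have aX: "a \<in> flags X" using True by (rule ghost_flagsD)
      have "relabel a \<in> flags Xc" using aX relabel_image by blast
      then have inv: "the_inv_into (flags Xc) (fm relabel_mor) a = relabel a"
        by (rule the_inv_into_f_eq[OF inj fm_relabel_mor_relabel[OF aX]])
      have "iv (mcomp X Xc Y relabel_mor (canonical_mor Y (genus X Y \<phi>))) a =
            fm relabel_mor (canonical_iv Y (relabel a))"
        unfolding mcomp_simps dom using True aX image_flags inv relabel_ghost_fresh[OF True] by simp
      also have "\<dots> = iv \<phi> a"
        unfolding canonical_iv_relabel[OF True]
        by (rule fm_relabel_mor_relabel[OF ghost_flagsD[OF iv_ghost[OF True]]])
      finally show ?thesis .
    next
      case False
      then show ?thesis unfolding mcomp_simps dom by (simp add: extensional_arb[OF iv_ext])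
    qed
  qed
qed

end

section \<open>Components of the comma category\<close>

abbreviation Ostar_carrier :: "agg \<Rightarrow> ((agg \<times> mor) \<times> unit) set" where
  "Ostar_carrier Y \<equiv> lan_carrier Ostar_ob Y"

abbreviation Ostar_step :: "agg \<Rightarrow> (((agg \<times> mor) \<times> unit) \<times> ((agg \<times> mor) \<times> unit)) set" where
  "Ostar_step Y \<equiv> lan_step Ostar_ob Ostar_ar Y"

abbreviation Ostar_equiv :: "agg \<Rightarrow> (((agg \<times> mor) \<times> unit) \<times> ((agg \<times> mor) \<times> unit)) set" where
  "Ostar_equiv Y \<equiv> lan_equiv Ostar_ob Ostar_ar Y"

abbreviation Ostar_class :: "agg \<Rightarrow> agg \<Rightarrow> mor \<Rightarrow> ((agg \<times> mor) \<times> unit) set" where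
  "Ostar_class Y X \<phi> \<equiv> lan_class Ostar_ob Ostar_ar Y ((X, \<phi>), ())"

lemma Ostar_carrier_iff: "((X, \<phi>), u) \<in> Ostar_carrier Y \<longleftrightarrow> ctd X Y \<phi>"
  unfolding lan_carrier_def Ostar_ob_def by auto

lemma Ostar_stepI:
  "ctd X Y \<phi> \<Longrightarrow> ctd X' Y \<phi>' \<Longrightarrow> forest X X' \<psi> \<Longrightarrow> mcomp X X' Y \<psi> \<phi>' = \<phi>
   \<Longrightarrow> (((X, \<phi>), ()), ((X', \<phi>'), ())) \<in> Ostar_step Y"
  unfolding lan_step_def Ostar_ob_def Ostar_ar_def by blast

lemma Ostar_stepE:
  assumes "(e, e') \<in> Ostar_step Y"
  obtains X \<phi> X' \<phi>' \<psi> where "e = ((X, \<phi>), ())" "e' = ((X', \<phi>'), ())" "ctd X Y \<phi>"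
    "ctd X' Y \<phi>'" "forest X X' \<psi>" "mcomp X X' Y \<psi> \<phi>' = \<phi>"
  using assms unfolding lan_step_def Ostar_ob_def Ostar_ar_def by blast

lemma Ostar_step_carrier: "(e, e') \<in> Ostar_step Y \<Longrightarrow> e \<in> Ostar_carrier Y \<and> e' \<in> Ostar_carrier Y"
  by (erule Ostar_stepE) (simp add: Ostar_carrier_iff)

lemma Ostar_equiv_if_step: "(e, e') \<in> Ostar_step Y \<Longrightarrow> (e, e') \<in> Ostar_equiv Y"
  unfolding lan_equiv_def using Ostar_step_carrier by blast

lemma equiv_Ostar_equiv: "equiv (Ostar_carrier Y) (Ostar_equiv Y)"
proof (rule equivI)
  show "refl_on (Ostar_carrier Y) (Ostar_equiv Y)" unfolding lan_equiv_def by (rule refl_onI) auto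
  have "sym ((Ostar_step Y \<union> (Ostar_step Y)\<inverse>)\<^sup>*)" by (rule sym_rtrancl) (simp add: sym_Un_converse)
  then show "sym (Ostar_equiv Y)" unfolding lan_equiv_def by (auto simp: sym_def)
  show "trans (Ostar_equiv Y)" unfolding lan_equiv_def by (rule transI) (auto intro: rtrancl_trans)
  show "Ostar_equiv Y \<subseteq> Ostar_carrier Y \<times> Ostar_carrier Y" unfolding lan_equiv_def by blast
qed

lemma Ostar_class_eq: "(e, e') \<in> Ostar_equiv Y \<Longrightarrow> lan_class Ostar_ob Ostar_ar Y e = lan_class Ostar_ob Ostar_ar Y e'"
  unfolding lan_class_def by (rule equiv_class_eq[OF equiv_Ostar_equiv])

lemma Ostar_class_in_lan: "ctd X Y \<phi> \<Longrightarrow> Ostar_class Y X \<phi> \<in> lan Ostar_ob Ostar_ar Y"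
  unfolding lan_def lan_class_def by (rule quotientI) (simp add: Ostar_carrier_iff)

lemma lan_Ostar_elemE:
  assumes "c \<in> lan Ostar_ob Ostar_ar Y"
  obtains X \<phi> where "ctd X Y \<phi>" "c = Ostar_class Y X \<phi>"
proof -
  obtain e where e: "e \<in> Ostar_carrier Y" "c = Ostar_equiv Y `` {e}"
    using assms unfolding lan_def by (auto elim: quotientE)
  obtain X \<phi> u where "e = ((X, \<phi>), u)" by (metis prod.exhaust)
  then show ?thesis using that e Ostar_carrier_iff unfolding lan_class_def by auto
qed

lemma genus_Ostar_step:
  assumes "(e, e') \<in> Ostar_step Y"
  shows "(case e of ((X, \<phi>), _) \<Rightarrow> genus X Y \<phi>) = (case e' of ((X, \<phi>), _) \<Rightarrow> genus X Y \<phi>)"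
  using assms
proof (rule Ostar_stepE)
  fix X \<phi> X' \<phi>' \<psi>
  assume "e = ((X, \<phi>), ())" "e' = ((X', \<phi>'), ())" and \<phi>': "ctd X' Y \<phi>'"
    and \<psi>: "forest X X' \<psi>" and comp: "mcomp X X' Y \<psi> \<phi>' = \<phi>"
  then show ?thesis using genus_forest_mcomp[OF \<psi> \<phi>'] unfolding comp by simp
qed

lemma genus_Ostar_equiv:
  assumes "(((X, \<phi>), u), ((X', \<phi>'), u')) \<in> Ostar_equiv Y"
  shows "genus X Y \<phi> = genus X' Y \<phi>'"
proof -
  let ?g = "\<lambda>e. case e of ((X, \<phi>), _) \<Rightarrow> genus X Y \<phi>"
  have "(((X, \<phi>), u), ((X', \<phi>'), u')) \<in> (Ostar_step Y \<union> (Ostar_step Y)\<inverse>)\<^sup>*"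
    using assms unfolding lan_equiv_def by blast
  then have "(?g ((X, \<phi>), u), ?g ((X', \<phi>'), u')) \<in> Id\<^sup>*"
  proof (rule rtrancl_map_pairs)
    fix e e' assume "(e, e') \<in> Ostar_step Y \<union> (Ostar_step Y)\<inverse>"
    then have "?g e = ?g e'" using genus_Ostar_step by (metis UnE converseD)
    then show "(?g e, ?g e') \<in> Id\<^sup>*" by simp
  qed
  then show ?thesis by simp
qed

text \<open>Contracting the non-loop ghost edges is a forest step, and once all ghost
  edges are loops the source is isomorphic to the canonical aggregate of the same genus.\<close>
theorem Ostar_equiv_canonical:
  "ctd X Y \<phi> \<Longrightarrow>
   (((X, \<phi>), ()), ((canonical_agg Y (genus X Y \<phi>), canonical_mor Y (genus X Y \<phi>)), ())) \<in> Ostar_equiv Y"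
proof (induction "card (verts X)" arbitrary: X \<phi> rule: less_induct)
  case less
  have adm: "admissible X Y \<phi>" using admissible_if_ctd[OF less.prems] .
  interpret admissible X Y \<phi> by (rule adm)
  show ?case
  proof (cases "\<exists>s\<in>ghost_flags X Y \<phi>. bd X s \<noteq> bd X (iv \<phi> s)")
    case True
    then obtain s where s: "s \<in> ghost_flags X Y \<phi>" "bd X s \<noteq> bd X (iv \<phi> s)" by blast
    let ?X1 = "edge_target X s (iv \<phi> s)"
    have ok: "edge_ok X s (iv \<phi> s)"
      using s iv_ghost[OF s(1)] ghost_flagsD unfolding edge_ok_def by blast
    obtain \<phi>1 where adm1: "admissible ?X1 Y \<phi>1"
      and comp: "mcomp X ?X1 Y (edge_mor X s (iv \<phi> s)) \<phi>1 = \<phi>"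
      and card: "card (verts ?X1) < card (verts X)"
      using edge_contraction_step[OF adm s] by blast
    have forest: "forest X ?X1 (edge_mor X s (iv \<phi> s))" by (rule forest_edge[OF agg_src ok])
    have ctd1: "ctd ?X1 Y \<phi>1" using ctd_if_admissible[OF adm1] .
    have "(((X, \<phi>), ()), ((?X1, \<phi>1), ())) \<in> Ostar_equiv Y"
      by (rule Ostar_equiv_if_step[OF Ostar_stepI[OF less.prems ctd1 forest comp]])
    moreover have "genus X Y \<phi> = genus ?X1 Y \<phi>1"
      using genus_forest_mcomp[OF forest ctd1] comp by simp
    ultimately show ?thesis
      using less.hyps[OF card ctd1] equiv_Ostar_equiv unfolding equiv_def trans_def by metis
  next
    case False
    then have loops: "\<forall>s\<in>ghost_flags X Y \<phi>. bd X (iv \<phi> s) = bd X s" by auto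
    have "\<exists>hv. bij_betw hv {s \<in> ghost_flags_at X Y \<phi> v. s < iv \<phi> s} {..<genus X Y \<phi> v}"
      if v: "v \<in> verts Y" for v
      using ex_bij_betw_finite_nat[of "{s \<in> ghost_flags_at X Y \<phi> v. s < iv \<phi> s}"]
        card_ghost_pair_reps[OF loops v] finite_ghost_flags_at
      by (simp add: atLeast0LessThan)
    then obtain h where "\<And>v. v \<in> verts Y \<Longrightarrow>
        bij_betw (h v) {s \<in> ghost_flags_at X Y \<phi> v. s < iv \<phi> s} {..<genus X Y \<phi> v}"
      by metis
    then interpret ghost_loop_relabelling X Y \<phi> h using loops by unfold_locales
    have "forest X Xc relabel_mor"
      by (rule forest_iso[OF agg_src is_agg_canonical[OF agg_tgt] iso_mor_relabel_mor])
    moreover have "ctd Xc Y (canonical_mor Y (genus X Y \<phi>))"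
      by (rule ctd_if_admissible[OF admissible_canonical[OF agg_tgt]])
    ultimately show ?thesis
      using Ostar_equiv_if_step[OF Ostar_stepI[OF less.prems _ _ mcomp_relabel_mor]] by blast
  qed
qed

definition class_genus :: "agg \<Rightarrow> ((agg \<times> mor) \<times> unit) set \<Rightarrow> nat \<Rightarrow> nat" where
  "class_genus Y c = (case SOME e. e \<in> c of ((X, \<phi>), _) \<Rightarrow> genus X Y \<phi>)"

lemma class_genus_Ostar_class:
  assumes "ctd X Y \<phi>"
  shows "class_genus Y (Ostar_class Y X \<phi>) = genus X Y \<phi>"
proof -
  have "((X, \<phi>), ()) \<in> Ostar_class Y X \<phi>"
    using equiv_class_self[OF equiv_Ostar_equiv] assms unfolding lan_class_def
    by (simp add: Ostar_carrier_iff)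
  then have "(SOME e. e \<in> Ostar_class Y X \<phi>) \<in> Ostar_class Y X \<phi>" by (rule someI)
  moreover obtain X' \<phi>' u where "(SOME e. e \<in> Ostar_class Y X \<phi>) = ((X', \<phi>'), u)"
    by (metis prod.exhaust)
  ultimately show ?thesis
    unfolding class_genus_def lan_class_def using genus_Ostar_equiv by auto
qed

lemma bij_betw_class_genus:
  assumes Y: "is_agg Y"
  shows "bij_betw (class_genus Y) (lan Ostar_ob Ostar_ar Y) (genus_ob Y)"
proof (rule bij_betw_imageI)
  show "inj_on (class_genus Y) (lan Ostar_ob Ostar_ar Y)"
  proof (rule inj_onI)
  fix c1 c2 assume c1: "c1 \<in> lan Ostar_ob Ostar_ar Y" and c2: "c2 \<in> lan Ostar_ob Ostar_ar Y"
    and eq: "class_genus Y c1 = class_genus Y c2"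
  obtain X1 \<phi>1 where ctd1: "ctd X1 Y \<phi>1" and c1_eq: "c1 = Ostar_class Y X1 \<phi>1"
    using c1 by (rule lan_Ostar_elemE)
  obtain X2 \<phi>2 where ctd2: "ctd X2 Y \<phi>2" and c2_eq: "c2 = Ostar_class Y X2 \<phi>2"
    using c2 by (rule lan_Ostar_elemE)
  have "genus X1 Y \<phi>1 = genus X2 Y \<phi>2"
    using eq unfolding c1_eq c2_eq class_genus_Ostar_class[OF ctd1] class_genus_Ostar_class[OF ctd2] .
  then show "c1 = c2"
    unfolding c1_eq c2_eq
    using Ostar_class_eq[OF Ostar_equiv_canonical[OF ctd1]] Ostar_class_eq[OF Ostar_equiv_canonical[OF ctd2]]
    by simp
  qed
  show "class_genus Y ` lan Ostar_ob Ostar_ar Y = genus_ob Y"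
  proof (intro equalityI subsetI)
  fix g assume "g \<in> class_genus Y ` lan Ostar_ob Ostar_ar Y"
  then obtain c where c: "c \<in> lan Ostar_ob Ostar_ar Y" "g = class_genus Y c" by blast
  obtain X \<phi> where "ctd X Y \<phi>" "c = Ostar_class Y X \<phi>" using c(1) by (rule lan_Ostar_elemE)
  then show "g \<in> genus_ob Y" using c(2) class_genus_Ostar_class genus_in_genus_ob by simp
next
  fix g assume g: "g \<in> genus_ob Y"
  have ctd: "ctd (canonical_agg Y g) Y (canonical_mor Y g)"
    by (rule ctd_if_admissible[OF admissible_canonical[OF Y]])
  have "class_genus Y (Ostar_class Y (canonical_agg Y g) (canonical_mor Y g)) = g"
    using class_genus_Ostar_class[OF ctd] genus_canonical[OF Y] g unfolding genus_ob_def by simp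
  then show "g \<in> class_genus Y ` lan Ostar_ob Ostar_ar Y"
    using Ostar_class_in_lan[OF ctd] by (metis image_eqI)
  qed
qed

definition postcomp :: "agg \<Rightarrow> agg \<Rightarrow> mor \<Rightarrow> (agg \<times> mor) \<times> unit \<Rightarrow> (agg \<times> mor) \<times> unit" where
  "postcomp Y Y' f e = (case e of ((X, \<phi>), u) \<Rightarrow> ((X, mcomp X Y Y' \<phi> f), u))"

lemma postcomp_simp [simp]: "postcomp Y Y' f ((X, \<phi>), u) = ((X, mcomp X Y Y' \<phi> f), u)"
  unfolding postcomp_def by simp

lemma postcomp_Ostar_step:
  assumes f: "ctd Y Y' f" and step: "(e, e') \<in> Ostar_step Y"
  shows "(postcomp Y Y' f e, postcomp Y Y' f e') \<in> Ostar_step Y'"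
  using step
proof (rule Ostar_stepE)
  fix X \<phi> X' \<phi>' \<psi>
  assume e: "e = ((X, \<phi>), ())" "e' = ((X', \<phi>'), ())" and \<phi>: "ctd X Y \<phi>" and \<phi>': "ctd X' Y \<phi>'"
    and \<psi>: "forest X X' \<psi>" and comp: "mcomp X X' Y \<psi> \<phi>' = \<phi>"
  have "mcomp X X' Y' \<psi> (mcomp X' Y Y' \<phi>' f) = mcomp X Y Y' \<phi> f"
    using mcomp_assoc[OF ghost_morphism_if_ctd[OF ctd_if_forest[OF \<psi>]]
        ghost_morphism_if_ctd[OF \<phi>'] ghost_morphism_if_ctd[OF f]] comp by simp
  then show ?thesis
    unfolding e postcomp_simp by (rule Ostar_stepI[OF ctd_comp[OF \<phi> f] ctd_comp[OF \<phi>' f] \<psi>])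
qed

lemma postcomp_Ostar_equiv:
  assumes f: "ctd Y Y' f" and equiv: "(e, e') \<in> Ostar_equiv Y"
  shows "(postcomp Y Y' f e, postcomp Y Y' f e') \<in> Ostar_equiv Y'"
proof -
  have carrier: "postcomp Y Y' f x \<in> Ostar_carrier Y'" if "x \<in> Ostar_carrier Y" for x
    using that ctd_comp[OF _ f] by (cases x) (auto simp: Ostar_carrier_iff)
  have "(e, e') \<in> (Ostar_step Y \<union> (Ostar_step Y)\<inverse>)\<^sup>*" using equiv unfolding lan_equiv_def by blast
  then have "(postcomp Y Y' f e, postcomp Y Y' f e') \<in> (Ostar_step Y' \<union> (Ostar_step Y')\<inverse>)\<^sup>*"
    by (rule rtrancl_map_pairs) (use postcomp_Ostar_step[OF f] in blast)
  moreover have "e \<in> Ostar_carrier Y" "e' \<in> Ostar_carrier Y" using equiv unfolding lan_equiv_def by blast+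
  ultimately show ?thesis unfolding lan_equiv_def using carrier by blast
qed

lemma lan_map_Ostar_class:
  assumes f: "ctd Y Y' f" and \<phi>: "ctd X Y \<phi>"
  shows "lan_map Ostar_ob Ostar_ar Y Y' f (Ostar_class Y X \<phi>) = Ostar_class Y' X (mcomp X Y Y' \<phi> f)"
proof -
  let ?P = "\<lambda>((X, \<phi>), a). lan_class Ostar_ob Ostar_ar Y' ((X, mcomp X Y Y' \<phi> f), a)"
  have P: "?P e = lan_class Ostar_ob Ostar_ar Y' (postcomp Y Y' f e)" for e
    by (cases e) auto
  have "?P ` Ostar_class Y X \<phi> = {Ostar_class Y' X (mcomp X Y Y' \<phi> f)}"
  proof (intro equalityI subsetI)
    fix x assume "x \<in> ?P ` Ostar_class Y X \<phi>"
    then obtain e where e: "(((X, \<phi>), ()), e) \<in> Ostar_equiv Y" and x: "x = ?P e"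
      unfolding lan_class_def by blast
    have "Ostar_class Y' X (mcomp X Y Y' \<phi> f) = lan_class Ostar_ob Ostar_ar Y' (postcomp Y Y' f e)"
      using Ostar_class_eq[OF postcomp_Ostar_equiv[OF f e]] by simp
    then show "x \<in> {Ostar_class Y' X (mcomp X Y Y' \<phi> f)}" unfolding x P by simp
  next
    fix x assume "x \<in> {Ostar_class Y' X (mcomp X Y Y' \<phi> f)}"
    then have "x = ?P ((X, \<phi>), ())" by simp
    moreover have "((X, \<phi>), ()) \<in> Ostar_class Y X \<phi>"
      using equiv_class_self[OF equiv_Ostar_equiv] \<phi> unfolding lan_class_def
      by (simp add: Ostar_carrier_iff)
    ultimately show "x \<in> ?P ` Ostar_class Y X \<phi>" by blast
  qed
  then show ?thesis unfolding lan_map_def by simp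
qed

section \<open>Naturality and the case Y = *_S\<close>

lemma genus_eqI:
  assumes "g \<in> extensional (verts Y)" "\<And>v. v \<in> verts Y \<Longrightarrow> fibre_genus X Y \<phi> v = int (g v)"
  shows "genus X Y \<phi> = g"
proof (rule extensionalityI[OF _ assms(1)])
  show "genus X Y \<phi> \<in> extensional (verts Y)" unfolding genus_def by simp
qed (simp add: genus_def assms(2))

lemma fibre_genus_postcomp:
  assumes "ctd X Y \<phi>" "admissible Y Y' f" "w \<in> verts Y'"
  shows "fibre_genus X Y' (mcomp X Y Y' \<phi> f) w =
         (\<Sum>u\<in>fibre Y f w. int (genus X Y \<phi> u)) + fibre_genus Y Y' f w"
proof -
  interpret ghost_composable X Y Y' \<phi> f
    using ghost_morphism_if_ctd[OF assms(1)] admissible.axioms(1)[OF assms(2)]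
    by (rule ghost_composable.intro)
  have "fibre_genus X Y \<phi> u = int (genus X Y \<phi> u)" if "u \<in> fibre Y f w" for u
  proof -
    have "u \<in> verts Y" using that unfolding fibre_def by simp
    then show ?thesis using admissible.int_genus[OF admissible_if_ctd[OF assms(1)]] by simp
  qed
  then show ?thesis using fibre_genus_mcomp[OF assms(3)] by simp
qed

lemma genus_postcomp_iso:
  assumes Y: "is_agg Y" and Y': "is_agg Y'" and m: "iso_mor Y Y' m" and \<phi>: "ctd X Y \<phi>"
  shows "genus X Y' (mcomp X Y Y' \<phi> m) = genus_iso Y Y' m (genus X Y \<phi>)"
proof (rule genus_eqI)
  show "genus_iso Y Y' m (genus X Y \<phi>) \<in> extensional (verts Y')" unfolding genus_iso_def by simp
  fix w assume w: "w \<in> verts Y'"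
  then show "fibre_genus X Y' (mcomp X Y Y' \<phi> m) w = int (genus_iso Y Y' m (genus X Y \<phi>) w)"
    using fibre_genus_postcomp[OF \<phi> admissible_iso[OF Y Y' m] w]
    by (simp add: fibre_iso[OF Y Y' m] fibre_genus_iso[OF Y Y' m] genus_iso_def)
qed

lemma genus_postcomp_edge:
  assumes Y: "is_agg Y" and ok: "edge_ok Y s t" and \<phi>: "ctd X Y \<phi>"
  shows "genus X (edge_target Y s t) (mcomp X Y (edge_target Y s t) \<phi> (edge_mor Y s t))
         = genus_edge Y s t (genus X Y \<phi>)"
proof (rule genus_eqI)
  show "genus_edge Y s t (genus X Y \<phi>) \<in> extensional (verts (edge_target Y s t))"
    unfolding genus_edge_def by simp
  have ne: "bd Y s \<noteq> bd Y t" using ok unfolding edge_ok_def by simp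
  fix w assume w: "w \<in> verts (edge_target Y s t)"
  then show "fibre_genus X (edge_target Y s t) (mcomp X Y (edge_target Y s t) \<phi> (edge_mor Y s t)) w
        = int (genus_edge Y s t (genus X Y \<phi>) w)"
    using fibre_genus_postcomp[OF \<phi> admissible_edge[OF Y ok] w] ne
    by (simp add: fibre_edge[OF Y ok] fibre_genus_edge[OF Y ok] genus_edge_def)
qed

lemma genus_postcomp_loop:
  assumes Y: "is_agg Y" and ok: "loop_ok Y s t" and \<phi>: "ctd X Y \<phi>"
  shows "genus X (loop_target Y s t) (mcomp X Y (loop_target Y s t) \<phi> (loop_mor Y s t))
         = genus_loop Y s t (genus X Y \<phi>)"
proof (rule genus_eqI)
  show "genus_loop Y s t (genus X Y \<phi>) \<in> extensional (verts (loop_target Y s t))"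
    unfolding genus_loop_def by simp
  fix w assume w: "w \<in> verts (loop_target Y s t)"
  then show "fibre_genus X (loop_target Y s t) (mcomp X Y (loop_target Y s t) \<phi> (loop_mor Y s t)) w
        = int (genus_loop Y s t (genus X Y \<phi>) w)"
    using fibre_genus_postcomp[OF \<phi> admissible_loop[OF Y ok] w]
    by (simp add: fibre_loop[OF Y ok] fibre_genus_loop[OF Y ok] genus_loop_def)
qed

lemma int_genus_star:
  assumes \<phi>: "ctd X (star S) \<phi>"
  shows "int (genus X (star S) \<phi> 0) = b1 X (star S) \<phi>"
proof -
  interpret admissible X "star S" \<phi> by (rule admissible_if_ctd[OF \<phi>])
  have vm0: "vm \<phi> x = 0" if "x \<in> verts X" for x using that vm_onto by auto
  have "ghost_flags_at X (star S) \<phi> 0 = ghost_flags X (star S) \<phi>"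
    unfolding ghost_flags_at_def using vm0 bd_src ghost_flagsD by blast
  moreover have "fibre X \<phi> 0 = verts X" unfolding fibre_def using vm0 by auto
  ultimately show ?thesis
    using int_genus[of 0] unfolding fibre_genus_def b1_def ghost_flags_def by simp
qed

lemma bij_betw_genus_ob_star: "bij_betw (\<lambda>g. g 0) (genus_ob (star S)) (UNIV :: nat set)"
proof (rule bij_betwI[where g = "\<lambda>n. restrict (\<lambda>_. n) {0}"])
  show "\<And>g. g \<in> genus_ob (star S) \<Longrightarrow> restrict (\<lambda>_. g 0) {0} = g"
    unfolding genus_ob_def by (rule extensionalityI[where A = "{0}"]) auto
qed (simp_all add: genus_ob_def)

lemma class_genus_lan_map:
  assumes f: "ctd Y Y' f" and c: "c \<in> lan Ostar_ob Ostar_ar Y"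
  obtains X \<phi> where "ctd X Y \<phi>" "class_genus Y c = genus X Y \<phi>"
    "class_genus Y' (lan_map Ostar_ob Ostar_ar Y Y' f c) = genus X Y' (mcomp X Y Y' \<phi> f)"
proof -
  obtain X \<phi> where \<phi>: "ctd X Y \<phi>" and c_eq: "c = Ostar_class Y X \<phi>"
    using c by (rule lan_Ostar_elemE)
  show ?thesis
    by (rule that[OF \<phi>]) (simp_all add: c_eq lan_map_Ostar_class[OF f \<phi>]
        class_genus_Ostar_class[OF \<phi>] class_genus_Ostar_class[OF ctd_comp[OF \<phi> f]])
qed

lemma lan_Ostar_star:
  assumes "finite S"
  shows "\<exists>\<gamma>. bij_betw \<gamma> (lan Ostar_ob Ostar_ar (star S)) (UNIV :: nat set)
           \<and> (\<forall>X \<phi>. ctd X (star S) \<phi> \<longrightarrow> int (\<gamma> (Ostar_class (star S) X \<phi>)) = b1 X (star S) \<phi>)"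
proof (intro exI conjI allI impI)
  show "bij_betw (\<lambda>c. class_genus (star S) c 0) (lan Ostar_ob Ostar_ar (star S)) UNIV"
    using bij_betw_trans[OF bij_betw_class_genus[OF is_agg_star[OF assms]] bij_betw_genus_ob_star]
    by (simp add: comp_def)
  show "int (class_genus (star S) (Ostar_class (star S) X \<phi>) 0) = b1 X (star S) \<phi>"
    if "ctd X (star S) \<phi>" for X \<phi>
    using class_genus_Ostar_class[OF that] int_genus_star[OF that] by simp
qed

theorem proposition5p4:
  shows "(\<exists>\<beta> :: agg \<Rightarrow> ((agg \<times> mor) \<times> unit) set \<Rightarrow> (nat \<Rightarrow> nat).
           (\<forall>Y. is_agg Y \<longrightarrow> bij_betw (\<beta> Y) (lan Ostar_ob Ostar_ar Y) (genus_ob Y))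
         \<and> (\<forall>Y Y' m. is_agg Y \<and> is_agg Y' \<and> iso_mor Y Y' m \<longrightarrow>
              (\<forall>c \<in> lan Ostar_ob Ostar_ar Y.
                 \<beta> Y' (lan_map Ostar_ob Ostar_ar Y Y' m c) = genus_iso Y Y' m (\<beta> Y c)))
         \<and> (\<forall>Y s t. is_agg Y \<and> edge_ok Y s t \<longrightarrow>
              (\<forall>c \<in> lan Ostar_ob Ostar_ar Y.
                 \<beta> (edge_target Y s t) (lan_map Ostar_ob Ostar_ar Y (edge_target Y s t) (edge_mor Y s t) c)
                   = genus_edge Y s t (\<beta> Y c)))
         \<and> (\<forall>Y s t. is_agg Y \<and> loop_ok Y s t \<longrightarrow>
              (\<forall>c \<in> lan Ostar_ob Ostar_ar Y.
                 \<beta> (loop_target Y s t) (lan_map Ostar_ob Ostar_ar Y (loop_target Y s t) (loop_mor Y s t) c)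
                   = genus_loop Y s t (\<beta> Y c))))
       \<and> (\<forall>S :: nat set. finite S \<longrightarrow>
           (\<exists>\<gamma>. bij_betw \<gamma> (lan Ostar_ob Ostar_ar (star S)) (UNIV :: nat set)
              \<and> (\<forall>X \<phi>. ctd X (star S) \<phi> \<longrightarrow>
                   int (\<gamma> (lan_class Ostar_ob Ostar_ar (star S) ((X, \<phi>), ()))) = b1 X (star S) \<phi>)))"
proof (intro conjI exI[of _ class_genus] allI impI ballI)
  fix Y Y' m c assume gen: "is_agg Y \<and> is_agg Y' \<and> iso_mor Y Y' m"
    and "c \<in> lan Ostar_ob Ostar_ar Y"
  with ctd_iso obtain X \<phi> where "ctd X Y \<phi>" "class_genus Y c = genus X Y \<phi>"
    "class_genus Y' (lan_map Ostar_ob Ostar_ar Y Y' m c) = genus X Y' (mcomp X Y Y' \<phi> m)"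
    by (metis class_genus_lan_map)
  then show "class_genus Y' (lan_map Ostar_ob Ostar_ar Y Y' m c) = genus_iso Y Y' m (class_genus Y c)"
    using genus_postcomp_iso gen by simp
next
  fix Y s t c assume gen: "is_agg Y \<and> edge_ok Y s t" and "c \<in> lan Ostar_ob Ostar_ar Y"
  with ctd_edge obtain X \<phi> where "ctd X Y \<phi>" "class_genus Y c = genus X Y \<phi>"
    "class_genus (edge_target Y s t) (lan_map Ostar_ob Ostar_ar Y (edge_target Y s t) (edge_mor Y s t) c)
       = genus X (edge_target Y s t) (mcomp X Y (edge_target Y s t) \<phi> (edge_mor Y s t))"
    by (metis class_genus_lan_map)
  then show "class_genus (edge_target Y s t)
      (lan_map Ostar_ob Ostar_ar Y (edge_target Y s t) (edge_mor Y s t) c) =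
      genus_edge Y s t (class_genus Y c)"
    using genus_postcomp_edge gen by simp
next
  fix Y s t c assume gen: "is_agg Y \<and> loop_ok Y s t" and "c \<in> lan Ostar_ob Ostar_ar Y"
  with ctd_loop obtain X \<phi> where "ctd X Y \<phi>" "class_genus Y c = genus X Y \<phi>"
    "class_genus (loop_target Y s t) (lan_map Ostar_ob Ostar_ar Y (loop_target Y s t) (loop_mor Y s t) c)
       = genus X (loop_target Y s t) (mcomp X Y (loop_target Y s t) \<phi> (loop_mor Y s t))"
    by (metis class_genus_lan_map)
  then show "class_genus (loop_target Y s t)
      (lan_map Ostar_ob Ostar_ar Y (loop_target Y s t) (loop_mor Y s t) c) =
      genus_loop Y s t (class_genus Y c)"
    using genus_postcomp_loop gen by simp
qed (blast intro: bij_betw_class_genus lan_Ostar_star)+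

end
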